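(* $$\{\varphi\in\mathrm{End}_K(P_n)\mid [x_i,\varphi]\in F_n,\ [y_i,\varphi]\in F_n\ \text{for all } i=1,\dots,n\}=\begin{cases}\mathbb{S}_1& n=1,\\ K+F_n & n>1.\end{cases}$$
   Context: $K$ is a field of characteristic zero. $\mathbb{S}_n$ is the $K$-algebra generated by $x_1,\dots,x_n,y_1,\dots,y_n$ with defining relations $y_ix_i=1$ and $[x_i,y_j]=[x_i,x_j]=[y_i,y_j]=0$ for $i\ne j$; it acts faithfully on $P_n=K[x_1,\dots,x_n]$ by $x_i*x^\alpha=x^{\alpha+e_i}$, $y_i*x^\alpha=x^{\alpha-e_i}$ if $\alpha_i>0$ and $0$ otherwise, so $\mathbb{S}_n\subset\mathrm{End}_K(P_n)$. For $k,l\in\mathbb{N}$, $E_{kl}(i):=x_i^ky_i^l-x_i^{k+1}y_i^{l+1}$; for $\alpha,\beta\in\mathbb{N}^n$, $E_{\alpha\beta}:=\prod_iE_{\alpha_i\beta_i}(i)$, and $F_n:=\bigoplus_{\alpha,\beta\in\mathbb{N}^n}KE_{\alpha\beta}$. *)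

theory Defs
  imports Main
begin

text \<open>Monomials x^alpha in P_n = K[x_1..x_n] are indexed by exponent functions
  alpha :: nat => nat vanishing outside {0..<n} (variables are indexed 0..n-1).
  A polynomial is its coefficient function.  End_K(P_n) is the set of K-linear
  self-maps of P_n; to make equality of maps meaningful they are required to
  send everything outside P_n to 0.\<close>

type_synonym 'k pol = "(nat \<Rightarrow> nat) \<Rightarrow> 'k"
type_synonym 'k op = "'k pol \<Rightarrow> 'k pol"

definition valid :: "nat \<Rightarrow> (nat \<Rightarrow> nat) \<Rightarrow> bool" where
  "valid n \<alpha> \<longleftrightarrow> (\<forall>i\<ge>n. \<alpha> i = 0)"

definition Pn :: "nat \<Rightarrow> ('k::zero) pol set" where
  "Pn n = {p. finite {\<alpha>. p \<alpha> \<noteq> 0} \<and> (\<forall>\<alpha>. p \<alpha> \<noteq> 0 \<longrightarrow> valid n \<alpha>)}"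

definition EndK :: "nat \<Rightarrow> ('k::field) op set" where
  "EndK n = {\<phi>. (\<forall>p\<in>Pn n. \<phi> p \<in> Pn n)
     \<and> (\<forall>p\<in>Pn n. \<forall>q\<in>Pn n. \<phi> (\<lambda>\<alpha>. p \<alpha> + q \<alpha>) = (\<lambda>\<alpha>. \<phi> p \<alpha> + \<phi> q \<alpha>))
     \<and> (\<forall>c. \<forall>p\<in>Pn n. \<phi> (\<lambda>\<alpha>. c * p \<alpha>) = (\<lambda>\<alpha>. c * \<phi> p \<alpha>))
     \<and> (\<forall>p. p \<notin> Pn n \<longrightarrow> \<phi> p = (\<lambda>_. 0))}"

definition Idop :: "nat \<Rightarrow> ('k::zero) op" where
  "Idop n p = (if p \<in> Pn n then p else (\<lambda>_. 0))"

definition Xop :: "nat \<Rightarrow> nat \<Rightarrow> ('k::zero) op" where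
  "Xop n i p = (if p \<in> Pn n then (\<lambda>\<beta>. if 0 < \<beta> i then p (\<beta>(i := \<beta> i - 1)) else 0)
                else (\<lambda>_. 0))"

definition Yop :: "nat \<Rightarrow> nat \<Rightarrow> ('k::zero) op" where
  "Yop n i p = (if p \<in> Pn n then (\<lambda>\<beta>. p (\<beta>(i := Suc (\<beta> i)))) else (\<lambda>_. 0))"

definition Ei :: "nat \<Rightarrow> nat \<Rightarrow> nat \<Rightarrow> nat \<Rightarrow> ('k::ring) op" where
  "Ei n k l i = (\<lambda>p \<gamma>. (Xop n i ^^ k) ((Yop n i ^^ l) (Idop n p)) \<gamma>
                    - (Xop n i ^^ Suc k) ((Yop n i ^^ Suc l) (Idop n p)) \<gamma>)"

primrec Eaux :: "nat \<Rightarrow> (nat \<Rightarrow> nat) \<Rightarrow> (nat \<Rightarrow> nat) \<Rightarrow> nat \<Rightarrow> ('k::ring) op" where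
  "Eaux n \<alpha> \<beta> 0 = Idop n"
| "Eaux n \<alpha> \<beta> (Suc j) = Ei n (\<alpha> j) (\<beta> j) j \<circ> Eaux n \<alpha> \<beta> j"

definition E :: "nat \<Rightarrow> (nat \<Rightarrow> nat) \<Rightarrow> (nat \<Rightarrow> nat) \<Rightarrow> ('k::ring) op" where
  "E n \<alpha> \<beta> = Eaux n \<alpha> \<beta> n"

definition F :: "nat \<Rightarrow> ('k::field) op set" where
  "F n = {\<phi>. \<exists>S c. finite S \<and> (\<forall>s\<in>S. valid n (fst s) \<and> valid n (snd s))
            \<and> \<phi> = (\<lambda>p \<gamma>. \<Sum>s\<in>S. c s * E n (fst s) (snd s) p \<gamma>)}"

definition KplusF :: "nat \<Rightarrow> ('k::field) op set" where
  "KplusF n = {\<phi>. \<exists>c f. f \<in> F n \<and> \<phi> = (\<lambda>p \<gamma>. c * Idop n p \<gamma> + f p \<gamma>)}"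

definition comm :: "('k::ring) op \<Rightarrow> 'k op \<Rightarrow> 'k op" where
  "comm f g = (\<lambda>p \<gamma>. f (g p) \<gamma> - g (f p) \<gamma>)"

inductive_set Salg :: "nat \<Rightarrow> ('k::field) op set" for n where
  one: "Idop n \<in> Salg n"
| genx: "i < n \<Longrightarrow> Xop n i \<in> Salg n"
| geny: "i < n \<Longrightarrow> Yop n i \<in> Salg n"
| add: "f \<in> Salg n \<Longrightarrow> g \<in> Salg n \<Longrightarrow> (\<lambda>p \<gamma>. f p \<gamma> + g p \<gamma>) \<in> Salg n"
| smult: "f \<in> Salg n \<Longrightarrow> (\<lambda>p \<gamma>. c * f p \<gamma>) \<in> Salg n"
| comp: "f \<in> Salg n \<Longrightarrow> g \<in> Salg n \<Longrightarrow> f \<circ> g \<in> Salg n"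

end

theory Submission
  imports Defs
begin

text \<open>
  An endomorphism \<phi> of P_n is described by its matrix entries
  \<phi>(x^\<delta>)(\<gamma>), indexed by pairs of monomials.  The operators E_{\<alpha>\<beta>} act as matrix
  units, E_{\<alpha>\<beta>} x^\<delta> = [\<delta> = \<beta>] x^\<alpha>, so F_n is exactly the set of endomorphisms
  with finitely many non-zero entries, equivalently entries vanishing in total
  degree |\<gamma>| + |\<delta>| \<ge> T for some T.  F_n is a two-sided ideal of S_n and
  commutation with a fixed operator is a derivation, which gives the inclusion
  "\<supseteq>" (for n = 1 because [x, y] = -E_{00}).

  For "\<subseteq>", the hypothesis says that [x_i, \<phi>] and [y_i, \<phi>] vanish beyond some
  degree T.  Spelled out on matrix entries this means that, far out, entries are
  invariant under the shift (\<gamma>, \<delta>) \<mapsto> (\<gamma> + e_i, \<delta> + e_i) and vanish on the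
  boundary \<gamma>_i = 0 < \<delta>_i or \<delta>_i = 0 < \<gamma>_i.  For n \<ge> 2 one can move between any
  two far diagonal entries and push every far off-diagonal entry to the boundary
  using a second coordinate, so \<phi> - c\<cdot>1 \<in> F_n.  For n = 1 the far part is a
  banded Toeplitz matrix, i.e. agrees with a polynomial in x and y, so
  \<phi> \<in> S_1 + F_1 = S_1.

  The argument works over any field.
\<close>

definition mon :: "(nat \<Rightarrow> nat) \<Rightarrow> ('k::zero_neq_one) pol" where
  "mon \<delta> = (\<lambda>\<alpha>. if \<alpha> = \<delta> then 1 else 0)"

definition supp :: "('k::zero) pol \<Rightarrow> (nat \<Rightarrow> nat) set" where
  "supp p = {\<alpha>. p \<alpha> \<noteq> 0}"

lemma Pn_zero [simp]: "(\<lambda>_. 0) \<in> Pn n"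
  by (simp add: Pn_def)

lemma Pn_add: "(p::('k::field) pol) \<in> Pn n \<Longrightarrow> q \<in> Pn n \<Longrightarrow> (\<lambda>\<alpha>. p \<alpha> + q \<alpha>) \<in> Pn n"
proof -
  assume p: "p \<in> Pn n" and q: "q \<in> Pn n"
  have "{\<alpha>. p \<alpha> + q \<alpha> \<noteq> 0} \<subseteq> {\<alpha>. p \<alpha> \<noteq> 0} \<union> {\<alpha>. q \<alpha> \<noteq> 0}" by auto
  then show ?thesis using p q unfolding Pn_def by (auto intro: finite_subset)
qed

lemma Pn_smult: "p \<in> Pn n \<Longrightarrow> (\<lambda>\<alpha>. (c::'k::field) * p \<alpha>) \<in> Pn n"
proof -
  assume p: "p \<in> Pn n"
  have "{\<alpha>. c * p \<alpha> \<noteq> 0} \<subseteq> {\<alpha>. p \<alpha> \<noteq> 0}" by auto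
  then show ?thesis using p unfolding Pn_def by (auto intro: finite_subset)
qed

lemma Pn_mon: "valid n \<delta> \<Longrightarrow> mon \<delta> \<in> Pn n"
  unfolding Pn_def mon_def by auto

lemma supp_finite: "p \<in> Pn n \<Longrightarrow> finite (supp p)"
  by (auto simp: Pn_def supp_def)

lemma supp_valid: "p \<in> Pn n \<Longrightarrow> \<delta> \<in> supp p \<Longrightarrow> valid n \<delta>"
  by (auto simp: Pn_def supp_def)

lemma Pn_valid: "p \<in> Pn n \<Longrightarrow> \<not> valid n \<gamma> \<Longrightarrow> p \<gamma> = 0"
  by (auto simp: Pn_def)

lemma poly_expand:
  fixes p :: "('k::field) pol"
  assumes "p \<in> Pn n"
  shows "p = (\<lambda>\<alpha>. \<Sum>\<delta>\<in>supp p. p \<delta> * mon \<delta> \<alpha>)"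
proof
  fix \<alpha>
  have "(\<Sum>\<delta>\<in>supp p. p \<delta> * mon \<delta> \<alpha>) = (\<Sum>\<delta>\<in>supp p. if \<delta> = \<alpha> then p \<alpha> else 0)"
    by (rule sum.cong) (auto simp: mon_def)
  also have "\<dots> = p \<alpha>" using supp_finite[OF assms] by (simp add: supp_def)
  finally show "p \<alpha> = (\<Sum>\<delta>\<in>supp p. p \<delta> * mon \<delta> \<alpha>)" by simp
qed

lemma valid_eq: "valid n a \<Longrightarrow> valid n b \<Longrightarrow> (\<forall>i<n. a i = b i) \<longleftrightarrow> a = b"
  unfolding valid_def by (auto simp: fun_eq_iff) (metis not_le)

lemma valid_upd: "i < n \<Longrightarrow> valid n (\<beta>(i := k)) = valid n \<beta>"
  unfolding valid_def by auto

lemma EndK_D: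
  assumes "\<phi> \<in> EndK n"
  shows EndK_Pn_closed: "\<And>p. p \<in> Pn n \<Longrightarrow> \<phi> p \<in> Pn n"
    and EndK_add_arg: "\<And>p q. p \<in> Pn n \<Longrightarrow> q \<in> Pn n \<Longrightarrow> \<phi> (\<lambda>\<alpha>. p \<alpha> + q \<alpha>) = (\<lambda>\<alpha>. \<phi> p \<alpha> + \<phi> q \<alpha>)"
    and EndK_smult_arg: "\<And>c p. p \<in> Pn n \<Longrightarrow> \<phi> (\<lambda>\<alpha>. c * p \<alpha>) = (\<lambda>\<alpha>. c * \<phi> p \<alpha>)"
    and EndK_outside: "\<And>p. p \<notin> Pn n \<Longrightarrow> \<phi> p = (\<lambda>_. 0)"
  using assms unfolding EndK_def by auto

lemma EndK_I:
  assumes "\<And>p. p \<in> Pn n \<Longrightarrow> \<phi> p \<in> Pn n"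
    and "\<And>p q. p \<in> Pn n \<Longrightarrow> q \<in> Pn n \<Longrightarrow> \<phi> (\<lambda>\<alpha>. p \<alpha> + q \<alpha>) = (\<lambda>\<alpha>. \<phi> p \<alpha> + \<phi> q \<alpha>)"
    and "\<And>c p. p \<in> Pn n \<Longrightarrow> \<phi> (\<lambda>\<alpha>. c * p \<alpha>) = (\<lambda>\<alpha>. c * \<phi> p \<alpha>)"
    and "\<And>p. p \<notin> Pn n \<Longrightarrow> \<phi> p = (\<lambda>_. 0)"
  shows "\<phi> \<in> EndK n"
  using assms unfolding EndK_def by auto

lemma EndK_Pn: "\<phi> \<in> EndK n \<Longrightarrow> \<phi> p \<in> Pn n"
  using EndK_Pn_closed[of \<phi> n p] EndK_outside[of \<phi> n p] by (cases "p \<in> Pn n") auto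

lemma EndK_zero: "\<phi> \<in> EndK n \<Longrightarrow> \<phi> (\<lambda>_. 0) = (\<lambda>_. 0)"
  using EndK_smult_arg[of \<phi> n "\<lambda>_. 0" 0] by simp

lemma EndK_diff_arg:
  assumes f: "\<phi> \<in> EndK n" and p: "p \<in> Pn n" and q: "q \<in> Pn n"
  shows "\<phi> (\<lambda>\<alpha>. p \<alpha> - q \<alpha>) = (\<lambda>\<alpha>. \<phi> p \<alpha> - \<phi> q \<alpha>)"
proof -
  have "\<phi> (\<lambda>\<alpha>. p \<alpha> + (\<lambda>\<alpha>. (-1) * q \<alpha>) \<alpha>) = (\<lambda>\<alpha>. \<phi> p \<alpha> + \<phi> (\<lambda>\<alpha>. (-1) * q \<alpha>) \<alpha>)"
    by (rule EndK_add_arg[OF f p Pn_smult[OF q]])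
  then show ?thesis using EndK_smult_arg[OF f q, of "-1"] by simp
qed

lemma EndK_add: "f \<in> EndK n \<Longrightarrow> g \<in> EndK n \<Longrightarrow> (\<lambda>p \<gamma>. f p \<gamma> + g p \<gamma>) \<in> EndK n"
  by (rule EndK_I)
    (simp add: EndK_Pn Pn_add, simp add: EndK_add_arg algebra_simps,
     simp add: EndK_smult_arg algebra_simps, simp add: EndK_outside)

lemma EndK_smult: "f \<in> EndK n \<Longrightarrow> (\<lambda>p \<gamma>. c * f p \<gamma>) \<in> EndK n"
  by (rule EndK_I)
    (simp add: EndK_Pn Pn_smult, simp add: EndK_add_arg algebra_simps,
     simp add: EndK_smult_arg algebra_simps, simp add: EndK_outside)

lemma EndK_diff: "f \<in> EndK n \<Longrightarrow> g \<in> EndK n \<Longrightarrow> (\<lambda>p \<gamma>. f p \<gamma> - g p \<gamma>) \<in> EndK n"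
proof -
  assume "f \<in> EndK n" "g \<in> EndK n"
  then have "(\<lambda>p \<gamma>. f p \<gamma> + (\<lambda>p \<gamma>. (-1) * g p \<gamma>) p \<gamma>) \<in> EndK n"
    by (intro EndK_add EndK_smult)
  then show ?thesis by simp
qed

lemma EndK_comp: "f \<in> EndK n \<Longrightarrow> g \<in> EndK n \<Longrightarrow> f \<circ> g \<in> EndK n"
  by (rule EndK_I)
    (simp add: EndK_Pn, simp add: EndK_add_arg EndK_Pn, simp add: EndK_smult_arg EndK_Pn,
     simp add: EndK_outside EndK_zero)

lemma EndK_comm: "f \<in> EndK n \<Longrightarrow> g \<in> EndK n \<Longrightarrow> comm f g \<in> EndK n"
  unfolding comm_def using EndK_diff[of "f \<circ> g" n "g \<circ> f"] EndK_comp by auto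

lemma Idop_EndK: "Idop n \<in> EndK n"
  by (rule EndK_I) (auto simp: Idop_def Pn_add Pn_smult)

lemma Idop_right: "f \<in> EndK n \<Longrightarrow> f (Idop n p) = f p"
  by (simp add: Idop_def EndK_outside EndK_zero)

lemma EndK_lin_comb:
  fixes \<phi> :: "('k::field) op"
  assumes f: "\<phi> \<in> EndK n" and A: "finite A" "\<And>\<delta>. \<delta> \<in> A \<Longrightarrow> valid n \<delta>"
  shows "(\<lambda>\<alpha>. \<Sum>\<delta>\<in>A. c \<delta> * mon \<delta> \<alpha>) \<in> Pn n \<and>
         \<phi> (\<lambda>\<alpha>. \<Sum>\<delta>\<in>A. c \<delta> * mon \<delta> \<alpha>) = (\<lambda>\<gamma>. \<Sum>\<delta>\<in>A. c \<delta> * \<phi> (mon \<delta>) \<gamma>)"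
  using A
proof (induction A rule: finite_induct)
  case empty
  then show ?case using EndK_zero[OF f] by simp
next
  case (insert x A)
  let ?q = "\<lambda>\<alpha>. \<Sum>\<delta>\<in>A. c \<delta> * mon \<delta> \<alpha>"
  have q: "?q \<in> Pn n" "\<phi> ?q = (\<lambda>\<gamma>. \<Sum>\<delta>\<in>A. c \<delta> * \<phi> (mon \<delta>) \<gamma>)" using insert by auto
  have m: "(\<lambda>\<alpha>. c x * mon x \<alpha>) \<in> Pn n" by (intro Pn_smult Pn_mon) (simp add: insert)
  have eq: "(\<lambda>\<alpha>. \<Sum>\<delta>\<in>insert x A. c \<delta> * mon \<delta> \<alpha>) = (\<lambda>\<alpha>. c x * mon x \<alpha> + ?q \<alpha>)"
    using insert by simp
  show ?case
    unfolding eq using Pn_add[OF m q(1)] EndK_add_arg[OF f m q(1)] q(2) insert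
      EndK_smult_arg[OF f Pn_mon[of n x], of "c x"] by simp
qed

lemma EndK_expand:
  fixes \<phi> :: "('k::field) op"
  assumes f: "\<phi> \<in> EndK n" and p: "p \<in> Pn n"
  shows "\<phi> p = (\<lambda>\<gamma>. \<Sum>\<delta>\<in>supp p. p \<delta> * \<phi> (mon \<delta>) \<gamma>)"
  using poly_expand[OF p] EndK_lin_comb[OF f supp_finite[OF p] supp_valid[OF p]] by metis

lemma EndK_ext:
  fixes \<phi> \<psi> :: "('k::field) op"
  assumes f: "\<phi> \<in> EndK n" and g: "\<psi> \<in> EndK n"
    and eq: "\<And>\<delta>. valid n \<delta> \<Longrightarrow> \<phi> (mon \<delta>) = \<psi> (mon \<delta>)"
  shows "\<phi> = \<psi>"
proof
  fix p
  show "\<phi> p = \<psi> p"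
  proof (cases "p \<in> Pn n")
    case True
    then show ?thesis using EndK_expand[OF f True] EndK_expand[OF g True] eq supp_valid[OF True]
      by simp
  qed (simp add: EndK_outside[OF f] EndK_outside[OF g])
qed

lemma Xop_EndK: assumes i: "i < n" shows "(Xop n i :: ('k::field) op) \<in> EndK n"
proof (rule EndK_I)
  fix p :: "'k pol" assume p: "p \<in> Pn n"
  let ?q = "Xop n i p"
  have q: "?q = (\<lambda>\<beta>. if 0 < \<beta> i then p (\<beta>(i := \<beta> i - 1)) else 0)" using p by (simp add: Xop_def)
  have "{\<beta>. ?q \<beta> \<noteq> 0} \<subseteq> (\<lambda>\<alpha>. \<alpha>(i := Suc (\<alpha> i))) ` {\<alpha>. p \<alpha> \<noteq> 0}"
  proof
    fix \<beta> assume "\<beta> \<in> {\<beta>. ?q \<beta> \<noteq> 0}"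
    then have "0 < \<beta> i" "p (\<beta>(i := \<beta> i - 1)) \<noteq> 0" by (auto simp: q split: if_splits)
    then show "\<beta> \<in> (\<lambda>\<alpha>. \<alpha>(i := Suc (\<alpha> i))) ` {\<alpha>. p \<alpha> \<noteq> 0}"
      by (intro image_eqI[of _ _ "\<beta>(i := \<beta> i - 1)"]) auto
  qed
  moreover have "valid n \<beta>" if "?q \<beta> \<noteq> 0" for \<beta>
  proof -
    have "p (\<beta>(i := \<beta> i - 1)) \<noteq> 0" using that by (auto simp: q split: if_splits)
    then show "valid n \<beta>" using p valid_upd[OF i] by (auto simp: Pn_def)
  qed
  ultimately show "?q \<in> Pn n" using p unfolding Pn_def by (auto intro: finite_subset)
qed (auto simp: Xop_def Pn_add Pn_smult)

lemma Yop_EndK: assumes i: "i < n" shows "(Yop n i :: ('k::field) op) \<in> EndK n"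
proof (rule EndK_I)
  fix p :: "'k pol" assume p: "p \<in> Pn n"
  let ?q = "Yop n i p"
  have q: "?q = (\<lambda>\<beta>. p (\<beta>(i := Suc (\<beta> i))))" using p by (simp add: Yop_def)
  have "{\<beta>. ?q \<beta> \<noteq> 0} \<subseteq> (\<lambda>\<alpha>. \<alpha>(i := \<alpha> i - 1)) ` {\<alpha>. p \<alpha> \<noteq> 0}"
  proof
    fix \<beta> assume "\<beta> \<in> {\<beta>. ?q \<beta> \<noteq> 0}"
    then have "p (\<beta>(i := Suc (\<beta> i))) \<noteq> 0" by (auto simp: q)
    then show "\<beta> \<in> (\<lambda>\<alpha>. \<alpha>(i := \<alpha> i - 1)) ` {\<alpha>. p \<alpha> \<noteq> 0}"
      by (intro image_eqI[of _ _ "\<beta>(i := Suc (\<beta> i))"]) auto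
  qed
  moreover have "valid n \<beta>" if "?q \<beta> \<noteq> 0" for \<beta>
  proof -
    have "p (\<beta>(i := Suc (\<beta> i))) \<noteq> 0" using that by (auto simp: q)
    then show "valid n \<beta>" using p valid_upd[OF i] by (auto simp: Pn_def)
  qed
  ultimately show "?q \<in> Pn n" using p unfolding Pn_def by (auto intro: finite_subset)
qed (auto simp: Yop_def Pn_add Pn_smult)

lemma Salg_EndK: "f \<in> Salg n \<Longrightarrow> f \<in> EndK n"
proof (induction rule: Salg.induct)
  case (comp f g)
  show ?case using comp.IH by (rule EndK_comp)
qed (auto intro: Idop_EndK Xop_EndK Yop_EndK EndK_add EndK_smult)

lemma Xop_zero [simp]: "Xop n i (\<lambda>_. 0) = (\<lambda>_. 0 :: 'k::field)"
  by (simp add: Xop_def)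

lemma Yop_zero [simp]: "Yop n i (\<lambda>_. 0) = (\<lambda>_. 0 :: 'k::field)"
  by (simp add: Yop_def)

lemma Idop_zero [simp]: "Idop n (\<lambda>_. 0) = (\<lambda>_. 0 :: 'k::field)"
  by (simp add: Idop_def)

lemma Idop_mon: "valid n \<mu> \<Longrightarrow> Idop n (mon \<mu>) = (mon \<mu> :: ('k::field) pol)"
  by (simp add: Idop_def Pn_mon)

lemma Xpow_zero [simp]: "(Xop n i ^^ k) (\<lambda>_. 0) = (\<lambda>_. 0 :: 'k::field)"
  by (induction k) auto

lemma Ypow_zero [simp]: "(Yop n i ^^ k) (\<lambda>_. 0) = (\<lambda>_. 0 :: 'k::field)"
  by (induction k) auto

lemma Xop_mon:
  assumes "i < n" "valid n \<mu>"
  shows "Xop n i (mon \<mu>) = (mon (\<mu>(i := Suc (\<mu> i))) :: ('k::field) pol)"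
proof -
  have "Xop n i (mon \<mu>) = (\<lambda>\<beta>. if 0 < \<beta> i then (mon \<mu> :: 'k pol) (\<beta>(i := \<beta> i - 1)) else 0)"
    using Pn_mon[OF assms(2)] by (auto simp: Xop_def)
  then show ?thesis by (auto simp: mon_def fun_eq_iff)
qed

lemma Yop_mon:
  assumes "i < n" "valid n \<mu>"
  shows "Yop n i (mon \<mu>) = (if 0 < \<mu> i then mon (\<mu>(i := \<mu> i - 1)) else (\<lambda>_. 0) :: ('k::field) pol)"
proof -
  have shift: "\<beta>(i := Suc (\<beta> i)) = \<mu> \<longleftrightarrow> 0 < \<mu> i \<and> \<beta> = \<mu>(i := \<mu> i - 1)" for \<beta>
    by (auto simp: fun_eq_iff split: if_splits)
  have "Yop n i (mon \<mu>) = (\<lambda>\<beta>. (mon \<mu> :: 'k pol) (\<beta>(i := Suc (\<beta> i))))"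
    using Pn_mon[OF assms(2)] by (auto simp: Yop_def)
  then show ?thesis unfolding mon_def by (simp only: shift) auto
qed

lemma Xpow_mon:
  assumes "i < n" "valid n \<mu>"
  shows "(Xop n i ^^ k) (mon \<mu>) = (mon (\<mu>(i := \<mu> i + k)) :: ('k::field) pol)"
proof (induction k)
  case (Suc k)
  have v: "valid n (\<mu>(i := \<mu> i + k))" using assms valid_upd by simp
  have "(Xop n i ^^ Suc k) (mon \<mu>) = Xop n i ((Xop n i ^^ k) (mon \<mu> :: 'k pol))" by simp
  also have "\<dots> = Xop n i (mon (\<mu>(i := \<mu> i + k)))" by (simp only: Suc.IH)
  also have "\<dots> = mon ((\<mu>(i := \<mu> i + k))(i := Suc ((\<mu>(i := \<mu> i + k)) i)))"
    by (rule Xop_mon[OF assms(1) v])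
  also have "(\<mu>(i := \<mu> i + k))(i := Suc ((\<mu>(i := \<mu> i + k)) i)) = \<mu>(i := \<mu> i + Suc k)"
    by simp
  finally show ?case .
qed simp

lemma Ypow_mon:
  assumes "i < n" "valid n \<mu>"
  shows "(Yop n i ^^ l) (mon \<mu>) =
    (if l \<le> \<mu> i then mon (\<mu>(i := \<mu> i - l)) else (\<lambda>_. 0) :: ('k::field) pol)"
proof (induction l)
  case (Suc l)
  show ?case
  proof (cases "l \<le> \<mu> i")
    case True
    have v: "valid n (\<mu>(i := \<mu> i - l))" using assms valid_upd by simp
    have "(Yop n i ^^ Suc l) (mon \<mu>) = Yop n i ((Yop n i ^^ l) (mon \<mu> :: 'k pol))" by simp
    also have "\<dots> = Yop n i (mon (\<mu>(i := \<mu> i - l)))"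
      using True by (simp only: Suc.IH if_True)
    also have "\<dots> = (if 0 < (\<mu>(i := \<mu> i - l)) i
        then mon ((\<mu>(i := \<mu> i - l))(i := (\<mu>(i := \<mu> i - l)) i - 1)) else (\<lambda>_. 0))"
      by (rule Yop_mon[OF assms(1) v])
    also have "\<dots> = (if Suc l \<le> \<mu> i then mon (\<mu>(i := \<mu> i - Suc l)) else (\<lambda>_. 0))"
    proof -
      have "0 < (\<mu>(i := \<mu> i - l)) i \<longleftrightarrow> Suc l \<le> \<mu> i" using True by (simp add: Suc_le_eq)
      moreover have "(\<mu>(i := \<mu> i - l))(i := (\<mu>(i := \<mu> i - l)) i - 1) = \<mu>(i := \<mu> i - Suc l)"
        by simp
      ultimately show ?thesis by (simp only:)
    qed
    finally show ?thesis .
  qed (use Suc in auto)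
qed simp

lemma Xpow_Ypow_mon:
  assumes "i < n" "valid n \<mu>"
  shows "(Xop n i ^^ k) ((Yop n i ^^ l) (mon \<mu>)) =
    (if l \<le> \<mu> i then mon (\<mu>(i := \<mu> i - l + k)) else (\<lambda>_. 0) :: ('k::field) pol)"
proof (cases "l \<le> \<mu> i")
  case True
  have v: "valid n (\<mu>(i := \<mu> i - l))" using assms valid_upd by simp
  have "(Xop n i ^^ k) ((Yop n i ^^ l) (mon \<mu>)) = (Xop n i ^^ k) (mon (\<mu>(i := \<mu> i - l)) :: 'k pol)"
    using True by (simp only: Ypow_mon[OF assms] if_True)
  also have "\<dots> = mon ((\<mu>(i := \<mu> i - l))(i := (\<mu>(i := \<mu> i - l)) i + k))"
    by (rule Xpow_mon[OF assms(1) v])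
  also have "(\<mu>(i := \<mu> i - l))(i := (\<mu>(i := \<mu> i - l)) i + k) = \<mu>(i := \<mu> i - l + k)"
    by simp
  finally show ?thesis using True by (simp only: if_True)
qed (simp add: Ypow_mon[OF assms])

lemma Ei_mon:
  assumes "i < n" "valid n \<mu>"
  shows "Ei n k l i (mon \<mu>) = (if \<mu> i = l then mon (\<mu>(i := k)) else (\<lambda>_. 0) :: ('k::field) pol)"
proof -
  have Ei: "Ei n k l i (mon \<mu>) = (\<lambda>\<gamma>. (Xop n i ^^ k) ((Yop n i ^^ l) (mon \<mu>)) \<gamma>
                    - (Xop n i ^^ Suc k) ((Yop n i ^^ Suc l) (mon \<mu> :: 'k pol)) \<gamma>)"
    by (simp only: Ei_def Idop_mon[OF assms(2)])
  consider "\<mu> i < l" | "\<mu> i = l" | "l < \<mu> i" by linarith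
  then show ?thesis
  proof cases
    case 1
    then show ?thesis by (simp only: Ei Xpow_Ypow_mon[OF assms]) simp
  next
    case 2
    then have "\<mu>(i := \<mu> i - l + k) = \<mu>(i := k)" by simp
    with 2 show ?thesis by (simp only: Ei Xpow_Ypow_mon[OF assms]) simp
  next
    case 3
    then have "\<mu> i - Suc l + Suc k = \<mu> i - l + k" by simp
    with 3 show ?thesis by (simp only: Ei Xpow_Ypow_mon[OF assms]) simp
  qed
qed

lemma Ei_zero [simp]: "Ei n k l i (\<lambda>_. 0) = (\<lambda>_. 0 :: 'k::field)"
  by (simp add: Ei_def)

lemma Eaux_mon:
  assumes "j \<le> n" "valid n \<delta>"
  shows "Eaux n \<alpha> \<beta> j (mon \<delta>) = (if \<forall>i<j. \<delta> i = \<beta> i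
     then mon (\<lambda>i. if i < j then \<alpha> i else \<delta> i) else (\<lambda>_. 0) :: ('k::field) pol)"
  using assms(1)
proof (induction j)
  case 0
  then show ?case using Idop_mon[OF assms(2)] by simp
next
  case (Suc j)
  let ?\<nu> = "\<lambda>i. if i < j then \<alpha> i else \<delta> i"
  have j: "j < n" using Suc by simp
  have v: "valid n ?\<nu>" using assms(2) j unfolding valid_def by auto
  have upd: "?\<nu>(j := \<alpha> j) = (\<lambda>i. if i < Suc j then \<alpha> i else \<delta> i)" by (auto simp: fun_eq_iff)
  have all: "(\<forall>i<Suc j. \<delta> i = \<beta> i) \<longleftrightarrow> (\<forall>i<j. \<delta> i = \<beta> i) \<and> \<delta> j = \<beta> j"
    using less_Suc_eq by auto
  show ?case
    using Suc Ei_mon[OF j v, of "\<alpha> j" "\<beta> j"] unfolding all upd by auto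
qed

lemma E_mon:
  assumes a: "valid n \<alpha>" and b: "valid n \<beta>" and d: "valid n \<delta>"
  shows "E n \<alpha> \<beta> (mon \<delta>) = (if \<delta> = \<beta> then mon \<alpha> else (\<lambda>_. 0) :: ('k::field) pol)"
proof -
  have \<alpha>: "(\<lambda>i. if i < n then \<alpha> i else \<delta> i) = \<alpha>"
    using a d unfolding valid_def by (auto simp: fun_eq_iff)
  have "Eaux n \<alpha> \<beta> n (mon \<delta>) = (if \<forall>i<n. \<delta> i = \<beta> i
     then mon (\<lambda>i. if i < n then \<alpha> i else \<delta> i) else (\<lambda>_. 0) :: 'k pol)"
    by (rule Eaux_mon[OF le_refl d])
  then show ?thesis unfolding E_def valid_eq[OF d b] \<alpha> .
qed

lemma Salg_sum:
  assumes "finite S" "\<And>s. s \<in> S \<Longrightarrow> h s \<in> Salg n"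
  shows "(\<lambda>p \<gamma>. \<Sum>s\<in>S. (c s :: 'k::field) * h s p \<gamma>) \<in> Salg n"
  using assms
proof (induction S rule: finite_induct)
  case empty
  have "(\<lambda>p \<gamma>. (0::'k) * Idop n p \<gamma>) \<in> Salg n" by (intro Salg.smult Salg.one)
  then show ?case by simp
next
  case (insert x S)
  have "(\<lambda>p \<gamma>. (\<lambda>p \<gamma>. c x * h x p \<gamma>) p \<gamma> + (\<lambda>p \<gamma>. \<Sum>s\<in>S. c s * h s p \<gamma>) p \<gamma>) \<in> Salg n"
    using insert by (intro Salg.add Salg.smult) auto
  then show ?case using insert by simp
qed

lemma Salg_Xpow: "i < n \<Longrightarrow> g \<in> Salg n \<Longrightarrow> (Xop n i ^^ k) \<circ> g \<in> Salg n"
proof (induction k)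
  case (Suc k)
  have "Xop n i \<circ> ((Xop n i ^^ k) \<circ> g) \<in> Salg n"
    by (rule Salg.comp[OF Salg.genx[OF Suc.prems(1)] Suc.IH[OF Suc.prems]])
  then show ?case by (simp add: comp_def)
qed simp

lemma Salg_Ypow: "i < n \<Longrightarrow> g \<in> Salg n \<Longrightarrow> (Yop n i ^^ k) \<circ> g \<in> Salg n"
proof (induction k)
  case (Suc k)
  have "Yop n i \<circ> ((Yop n i ^^ k) \<circ> g) \<in> Salg n"
    by (rule Salg.comp[OF Salg.geny[OF Suc.prems(1)] Suc.IH[OF Suc.prems]])
  then show ?case by (simp add: comp_def)
qed simp

lemma Ei_Salg: assumes i: "i < n" shows "(Ei n k l i :: ('k::field) op) \<in> Salg n"
proof -
  let ?A = "(Xop n i ^^ k) \<circ> ((Yop n i ^^ l) \<circ> Idop n) :: 'k op"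
  let ?B = "(Xop n i ^^ Suc k) \<circ> ((Yop n i ^^ Suc l) \<circ> Idop n) :: 'k op"
  have "(\<lambda>p \<gamma>. ?A p \<gamma> + (\<lambda>p \<gamma>. (-1) * ?B p \<gamma>) p \<gamma>) \<in> Salg n"
    using i by (intro Salg.add Salg.smult Salg_Xpow Salg_Ypow Salg.one)
  moreover have "(\<lambda>p \<gamma>. ?A p \<gamma> + (\<lambda>p \<gamma>. (-1) * ?B p \<gamma>) p \<gamma>) = Ei n k l i"
    unfolding Ei_def comp_apply by (intro ext) simp
  ultimately show ?thesis by simp
qed

lemma E_Salg: "E n \<alpha> \<beta> \<in> Salg n"
proof -
  have "Eaux n \<alpha> \<beta> j \<in> Salg n" if "j \<le> n" for j
    using that
  proof (induction j)
    case (Suc j)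
    then show ?case using Salg.comp[OF Ei_Salg[of j n "\<alpha> j" "\<beta> j"] Suc.IH] by (simp add: comp_def)
  qed (simp add: Salg.one)
  then show ?thesis unfolding E_def by blast
qed

lemma F_Salg: "f \<in> F n \<Longrightarrow> f \<in> Salg n"
  unfolding F_def by (auto intro!: Salg_sum E_Salg)

lemma F_EndK: "f \<in> F n \<Longrightarrow> f \<in> EndK n"
  using F_Salg Salg_EndK by blast

section \<open>F_n as the operators with finitely many non-zero matrix entries\<close>

text \<open>The (\<gamma>, \<delta>) matrix entry of \<phi> is \<phi>(x^\<delta>)(\<gamma>); finsupp says only finitely many are non-zero.\<close>
definition finsupp :: "nat \<Rightarrow> ('k::field) op \<Rightarrow> bool" where
  "finsupp n f \<longleftrightarrow> (\<exists>S. finite S \<and> (\<forall>\<delta> \<gamma>. valid n \<delta> \<longrightarrow> f (mon \<delta>) \<gamma> \<noteq> 0 \<longrightarrow> (\<gamma>, \<delta>) \<in> S))"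

lemma finsuppI:
  "finite S \<Longrightarrow> (\<And>\<delta> \<gamma>. valid n \<delta> \<Longrightarrow> f (mon \<delta>) \<gamma> \<noteq> 0 \<Longrightarrow> (\<gamma>, \<delta>) \<in> S) \<Longrightarrow> finsupp n f"
  unfolding finsupp_def by blast

lemma F_finsupp:
  assumes "f \<in> F n"
  shows "finsupp n (f :: ('k::field) op)"
proof -
  obtain S c where S: "finite S" "\<forall>s\<in>S. valid n (fst s) \<and> valid n (snd s)"
    and f: "f = (\<lambda>p \<gamma>. \<Sum>s\<in>S. c s * E n (fst s) (snd s) p \<gamma>)"
    using assms unfolding F_def by blast
  show ?thesis
  proof (rule finsuppI[OF S(1)])
    fix \<delta> \<gamma> assume d: "valid n \<delta>" and nz: "f (mon \<delta>) \<gamma> \<noteq> 0"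
    have "f (mon \<delta>) \<gamma> = (\<Sum>s\<in>S. c s * E n (fst s) (snd s) (mon \<delta>) \<gamma>)" using f by simp
    also have "\<dots> = (\<Sum>s\<in>S. c s * (if \<delta> = snd s then mon (fst s) \<gamma> else 0))"
    proof (rule sum.cong[OF refl])
      fix s assume "s \<in> S"
      then have "E n (fst s) (snd s) (mon \<delta>) = (if \<delta> = snd s then mon (fst s) else (\<lambda>_. 0) :: 'k pol)"
        using S(2) E_mon[OF _ _ d] by blast
      then show "c s * E n (fst s) (snd s) (mon \<delta>) \<gamma> = c s * (if \<delta> = snd s then mon (fst s) \<gamma> else 0)"
        by simp
    qed
    finally have "(\<Sum>s\<in>S. c s * (if \<delta> = snd s then mon (fst s) \<gamma> else 0)) \<noteq> 0"
      using nz by simp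
    then obtain s where "s \<in> S" "c s * (if \<delta> = snd s then mon (fst s) \<gamma> else 0) \<noteq> 0"
      by (rule sum.not_neutral_contains_not_neutral)
    then show "(\<gamma>, \<delta>) \<in> S" by (auto simp: mon_def split: if_splits)
  qed
qed

lemma finsupp_F:
  assumes fE: "f \<in> EndK n" and fs: "finsupp n (f :: ('k::field) op)"
  shows "f \<in> F n"
proof -
  obtain S where S: "finite S" "\<And>\<delta> \<gamma>. valid n \<delta> \<Longrightarrow> f (mon \<delta>) \<gamma> \<noteq> 0 \<Longrightarrow> (\<gamma>, \<delta>) \<in> S"
    using fs unfolding finsupp_def by blast
  define S' where "S' = {s\<in>S. valid n (fst s) \<and> valid n (snd s)}"
  have S': "finite S'" "\<forall>s\<in>S'. valid n (fst s) \<and> valid n (snd s)"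
    using S(1) by (auto simp: S'_def)
  define g where "g = (\<lambda>p \<gamma>. \<Sum>s\<in>S'. f (mon (snd s)) (fst s) * E n (fst s) (snd s) p \<gamma>)"
  have gF: "g \<in> F n"
    unfolding F_def g_def using S' by (intro CollectI exI[of _ S'] exI[of _ "\<lambda>s. f (mon (snd s)) (fst s)"]) simp
  have "f = g"
  proof (rule EndK_ext[OF fE F_EndK[OF gF]])
    fix \<delta> :: "nat \<Rightarrow> nat" assume d: "valid n \<delta>"
    show "f (mon \<delta>) = g (mon \<delta>)"
    proof
      fix \<gamma>
      have "g (mon \<delta>) \<gamma> = (\<Sum>s\<in>S'. f (mon (snd s)) (fst s) * E n (fst s) (snd s) (mon \<delta>) \<gamma>)"
        by (simp add: g_def)
      also have "\<dots> = (\<Sum>s\<in>S'. if s = (\<gamma>, \<delta>) then f (mon \<delta>) \<gamma> else 0)"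
      proof (rule sum.cong[OF refl])
        fix s assume "s \<in> S'"
        then have "E n (fst s) (snd s) (mon \<delta>) = (if \<delta> = snd s then mon (fst s) else (\<lambda>_. 0) :: 'k pol)"
          using S'(2) E_mon[OF _ _ d] by blast
        then show "f (mon (snd s)) (fst s) * E n (fst s) (snd s) (mon \<delta>) \<gamma>
            = (if s = (\<gamma>, \<delta>) then f (mon \<delta>) \<gamma> else 0)"
          by (cases s) (auto simp: mon_def)
      qed
      also have "\<dots> = f (mon \<delta>) \<gamma>"
      proof (cases "f (mon \<delta>) \<gamma> = 0")
        case False
        then have "valid n \<gamma>" using Pn_valid[OF EndK_Pn[OF fE]] by blast
        then have "(\<gamma>, \<delta>) \<in> S'" using S(2)[OF d False] d by (simp add: S'_def)
        then show ?thesis using S'(1) by simp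
      qed (simp add: S'(1))
      finally show "f (mon \<delta>) \<gamma> = g (mon \<delta>) \<gamma>" by simp
    qed
  qed
  then show ?thesis using gF by simp
qed

theorem F_char: "f \<in> F n \<longleftrightarrow> f \<in> EndK n \<and> finsupp n (f :: ('k::field) op)"
  using F_EndK F_finsupp finsupp_F by blast

lemma finsupp_zero: "finsupp n (\<lambda>p \<gamma>. 0)"
  by (rule finsuppI[of "{}"]) auto

lemma finsupp_add: "finsupp n f \<Longrightarrow> finsupp n g \<Longrightarrow> finsupp n (\<lambda>p \<gamma>. f p \<gamma> + g p \<gamma>)"
proof -
  assume "finsupp n f" "finsupp n g"
  then obtain S T where S: "finite S" "\<And>\<delta> \<gamma>. valid n \<delta> \<Longrightarrow> f (mon \<delta>) \<gamma> \<noteq> 0 \<Longrightarrow> (\<gamma>, \<delta>) \<in> S"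
    and T: "finite T" "\<And>\<delta> \<gamma>. valid n \<delta> \<Longrightarrow> g (mon \<delta>) \<gamma> \<noteq> 0 \<Longrightarrow> (\<gamma>, \<delta>) \<in> T"
    unfolding finsupp_def by blast
  show ?thesis
  proof (rule finsuppI[of "S \<union> T"])
    fix \<delta> \<gamma> assume d: "valid n \<delta>" and "f (mon \<delta>) \<gamma> + g (mon \<delta>) \<gamma> \<noteq> 0"
    then have "f (mon \<delta>) \<gamma> \<noteq> 0 \<or> g (mon \<delta>) \<gamma> \<noteq> 0" by auto
    then show "(\<gamma>, \<delta>) \<in> S \<union> T" using S(2)[OF d] T(2)[OF d] by blast
  qed (use S T in simp)
qed

lemma finsupp_smult: "finsupp n f \<Longrightarrow> finsupp n (\<lambda>p \<gamma>. c * f p \<gamma>)"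
  unfolding finsupp_def by (metis mult_zero_right)

lemma finsupp_diff: "finsupp n f \<Longrightarrow> finsupp n g \<Longrightarrow> finsupp n (\<lambda>p \<gamma>. f p \<gamma> - g p \<gamma>)"
proof -
  assume "finsupp n f" "finsupp n g"
  then have "finsupp n (\<lambda>p \<gamma>. f p \<gamma> + (\<lambda>p \<gamma>. (-1) * g p \<gamma>) p \<gamma>)"
    by (intro finsupp_add finsupp_smult)
  then show ?thesis by simp
qed

lemma finsupp_lcomp:
  assumes h: "h \<in> EndK n" and f: "f \<in> EndK n" and fs: "finsupp n f"
  shows "finsupp n (\<lambda>p. h (f p))"
proof -
  obtain S where S: "finite S" "\<And>\<delta> \<gamma>. valid n \<delta> \<Longrightarrow> f (mon \<delta>) \<gamma> \<noteq> 0 \<Longrightarrow> (\<gamma>, \<delta>) \<in> S"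
    using fs unfolding finsupp_def by blast
  let ?T = "\<Union>s\<in>S. (\<lambda>\<gamma>. (\<gamma>, snd s)) ` supp (h (mon (fst s)))"
  show ?thesis
  proof (rule finsuppI[of ?T])
    show "finite ?T" using S(1) supp_finite[OF EndK_Pn[OF h]] by (intro finite_UN_I finite_imageI)
  next
    fix \<delta> \<gamma> assume d: "valid n \<delta>" and nz: "h (f (mon \<delta>)) \<gamma> \<noteq> 0"
    have "h (f (mon \<delta>)) \<gamma> = (\<Sum>\<eta>\<in>supp (f (mon \<delta>)). f (mon \<delta>) \<eta> * h (mon \<eta>) \<gamma>)"
      using EndK_expand[OF h EndK_Pn[OF f]] by simp
    then obtain \<eta> where "\<eta> \<in> supp (f (mon \<delta>))" "f (mon \<delta>) \<eta> * h (mon \<eta>) \<gamma> \<noteq> 0"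
      using nz sum.not_neutral_contains_not_neutral by force
    then have "(\<eta>, \<delta>) \<in> S" and "\<gamma> \<in> supp (h (mon \<eta>))" using S(2)[OF d] by (auto simp: supp_def)
    then show "(\<gamma>, \<delta>) \<in> ?T" by (intro UN_I[of "(\<eta>, \<delta>)"] imageI) auto
  qed
qed

text \<open>Right multiplication by x_i or y_i moves each column of the matrix to a single other
  column, so it keeps finite support.\<close>
lemma finsupp_comp_Xop:
  assumes i: "i < n" and fs: "finsupp n f"
  shows "finsupp n (f \<circ> Xop n i)"
proof -
  obtain S where S: "finite S" "\<And>\<delta> \<gamma>. valid n \<delta> \<Longrightarrow> f (mon \<delta>) \<gamma> \<noteq> 0 \<Longrightarrow> (\<gamma>, \<delta>) \<in> S"
    using fs unfolding finsupp_def by blast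
  show ?thesis
  proof (rule finsuppI[of "(\<lambda>(a, b). (a, b(i := b i - 1))) ` S"])
    fix \<delta> \<gamma> assume d: "valid n \<delta>" and nz: "(f \<circ> Xop n i) (mon \<delta>) \<gamma> \<noteq> 0"
    have "valid n (\<delta>(i := Suc (\<delta> i)))" using d valid_upd[OF i] by simp
    moreover have "f (mon (\<delta>(i := Suc (\<delta> i)))) \<gamma> \<noteq> 0" using nz by (simp add: Xop_mon[OF i d])
    ultimately have "(\<gamma>, \<delta>(i := Suc (\<delta> i))) \<in> S" by (rule S(2))
    then show "(\<gamma>, \<delta>) \<in> (\<lambda>(a, b). (a, b(i := b i - 1))) ` S"
      by (rule rev_image_eqI) simp
  qed (use S(1) in simp)
qed

lemma finsupp_comp_Yop:
  assumes i: "i < n" and fE: "f \<in> EndK n" and fs: "finsupp n f"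
  shows "finsupp n (f \<circ> Yop n i)"
proof -
  obtain S where S: "finite S" "\<And>\<delta> \<gamma>. valid n \<delta> \<Longrightarrow> f (mon \<delta>) \<gamma> \<noteq> 0 \<Longrightarrow> (\<gamma>, \<delta>) \<in> S"
    using fs unfolding finsupp_def by blast
  show ?thesis
  proof (rule finsuppI[of "(\<lambda>(a, b). (a, b(i := Suc (b i)))) ` S"])
    fix \<delta> \<gamma> assume d: "valid n \<delta>" and nz: "(f \<circ> Yop n i) (mon \<delta>) \<gamma> \<noteq> 0"
    have d': "valid n (\<delta>(i := \<delta> i - 1))" using d valid_upd[OF i] by simp
    have pos: "0 < \<delta> i" and "f (mon (\<delta>(i := \<delta> i - 1))) \<gamma> \<noteq> 0"
      using nz by (auto simp: Yop_mon[OF i d] EndK_zero[OF fE] split: if_splits)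
    then have "(\<gamma>, \<delta>(i := \<delta> i - 1)) \<in> S" using S(2)[OF d'] by simp
    moreover have "(\<delta>(i := \<delta> i - 1))(i := Suc (\<delta> i - 1)) = \<delta>" using pos by (simp add: fun_eq_iff)
    ultimately show "(\<gamma>, \<delta>) \<in> (\<lambda>(a, b). (a, b(i := Suc (b i)))) ` S"
      by (intro rev_image_eqI) auto
  qed (use S(1) in simp)
qed

lemma finsupp_rcomp:
  assumes g: "g \<in> Salg n"
  shows "f \<in> EndK n \<Longrightarrow> finsupp n f \<Longrightarrow> finsupp n (f \<circ> g)"
  using g
proof (induction arbitrary: f rule: Salg.induct)
  case one
  then show ?case by (simp add: Idop_right comp_def)
next
  case (genx i)
  then show ?case by (blast intro: finsupp_comp_Xop)
next
  case (geny i)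
  then show ?case by (blast intro: finsupp_comp_Yop)
next
  case (add g h)
  have gE: "g \<in> EndK n" and hE: "h \<in> EndK n" using add.hyps Salg_EndK by auto
  have "f \<circ> (\<lambda>p \<gamma>. g p \<gamma> + h p \<gamma>) = (\<lambda>p \<gamma>. (f \<circ> g) p \<gamma> + (f \<circ> h) p \<gamma>)"
    using EndK_add_arg[OF add.prems(1) EndK_Pn[OF gE] EndK_Pn[OF hE]] by (simp add: fun_eq_iff)
  then show ?case using finsupp_add[OF add.IH(1)[OF add.prems] add.IH(2)[OF add.prems]] by simp
next
  case (smult g c)
  have gE: "g \<in> EndK n" using smult.hyps Salg_EndK by auto
  have "f \<circ> (\<lambda>p \<gamma>. c * g p \<gamma>) = (\<lambda>p \<gamma>. c * (f \<circ> g) p \<gamma>)"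
    using EndK_smult_arg[OF smult.prems(1) EndK_Pn[OF gE]] by (simp add: fun_eq_iff)
  then show ?case using finsupp_smult[OF smult.IH[OF smult.prems]] by simp
next
  case (comp g h)
  have "f \<circ> g \<in> EndK n" using EndK_comp[OF comp.prems(1) Salg_EndK[OF comp.hyps(1)]] .
  then have "finsupp n ((f \<circ> g) \<circ> h)" using comp.IH comp.prems by blast
  then show ?case by (simp only: comp_assoc)
qed

lemma comm_add:
  fixes A f g :: "('k::field) op"
  assumes A: "A \<in> EndK n" and f: "f \<in> EndK n" and g: "g \<in> EndK n"
  shows "comm A (\<lambda>p \<gamma>. f p \<gamma> + g p \<gamma>) = (\<lambda>p \<gamma>. comm A f p \<gamma> + comm A g p \<gamma>)"
proof (intro ext)
  fix p \<gamma>
  have "A (\<lambda>\<gamma>. f p \<gamma> + g p \<gamma>) = (\<lambda>\<gamma>. A (f p) \<gamma> + A (g p) \<gamma>)"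
    by (rule EndK_add_arg[OF A EndK_Pn[OF f] EndK_Pn[OF g]])
  then show "comm A (\<lambda>p \<gamma>. f p \<gamma> + g p \<gamma>) p \<gamma> = comm A f p \<gamma> + comm A g p \<gamma>"
    unfolding comm_def by simp
qed

lemma comm_smult:
  fixes A f :: "('k::field) op"
  assumes A: "A \<in> EndK n" and f: "f \<in> EndK n"
  shows "comm A (\<lambda>p \<gamma>. c * f p \<gamma>) = (\<lambda>p \<gamma>. c * comm A f p \<gamma>)"
proof (intro ext)
  fix p \<gamma>
  have "A (\<lambda>\<gamma>. c * f p \<gamma>) = (\<lambda>\<gamma>. c * A (f p) \<gamma>)"
    by (rule EndK_smult_arg[OF A EndK_Pn[OF f]])
  then show "comm A (\<lambda>p \<gamma>. c * f p \<gamma>) p \<gamma> = c * comm A f p \<gamma>"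
    unfolding comm_def by (simp add: algebra_simps)
qed

lemma comm_comp:
  fixes A f g :: "('k::field) op"
  assumes A: "A \<in> EndK n" and f: "f \<in> EndK n" and g: "g \<in> EndK n"
  shows "comm A (f \<circ> g) = (\<lambda>p \<gamma>. (comm A f \<circ> g) p \<gamma> + (f \<circ> comm A g) p \<gamma>)"
proof (intro ext)
  fix p \<gamma>
  have "f (\<lambda>\<gamma>. A (g p) \<gamma> - g (A p) \<gamma>) = (\<lambda>\<gamma>. f (A (g p)) \<gamma> - f (g (A p)) \<gamma>)"
    by (rule EndK_diff_arg[OF f EndK_Pn[OF A] EndK_Pn[OF g]])
  then show "comm A (f \<circ> g) p \<gamma> = (comm A f \<circ> g) p \<gamma> + (f \<circ> comm A g) p \<gamma>"
    unfolding comm_def by simp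
qed

lemma comm_Id:
  fixes A :: "('k::field) op"
  assumes A: "A \<in> EndK n"
  shows "comm A (Idop n) = (\<lambda>p \<gamma>. 0)"
proof (intro ext)
  fix p \<gamma>
  have "Idop n (A p) = A p" using EndK_Pn[OF A] by (simp add: Idop_def)
  then show "comm A (Idop n) p \<gamma> = 0" unfolding comm_def by (simp add: Idop_right[OF A])
qed

lemma comm_self: "comm f f = (\<lambda>p \<gamma>. 0)"
  unfolding comm_def by simp

lemma comm_swap: "comm g f = (\<lambda>p \<gamma>. (-1) * comm f g p \<gamma>)"
  for f g :: "('k::field) op"
  unfolding comm_def by (simp add: fun_eq_iff)

lemma finsupp_comm_Salg:
  fixes A :: "('k::field) op"
  assumes A: "A \<in> EndK n"
    and gx: "\<And>i. i < n \<Longrightarrow> finsupp n (comm A (Xop n i))"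
    and gy: "\<And>i. i < n \<Longrightarrow> finsupp n (comm A (Yop n i))"
    and \<phi>: "\<phi> \<in> Salg n"
  shows "finsupp n (comm A \<phi>)"
  using \<phi>
proof (induction rule: Salg.induct)
  case one
  then show ?case unfolding comm_Id[OF A] by (rule finsupp_zero)
next
  case (genx i)
  then show ?case by (rule gx)
next
  case (geny i)
  then show ?case by (rule gy)
next
  case (add f g)
  have fE: "f \<in> EndK n" and gE: "g \<in> EndK n" using add.hyps Salg_EndK by auto
  show ?case unfolding comm_add[OF A fE gE] by (rule finsupp_add[OF add.IH])
next
  case (smult f c)
  have fE: "f \<in> EndK n" using smult.hyps Salg_EndK by auto
  show ?case unfolding comm_smult[OF A fE] by (rule finsupp_smult[OF smult.IH])
next
  case (comp f g)
  have fE: "f \<in> EndK n" and gE: "g \<in> EndK n" using comp.hyps Salg_EndK by auto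
  have "finsupp n (comm A f \<circ> g)"
    by (rule finsupp_rcomp[OF comp.hyps(2) EndK_comm[OF A fE] comp.IH(1)])
  moreover have "finsupp n (\<lambda>p. f (comm A g p))"
    by (rule finsupp_lcomp[OF fE EndK_comm[OF A gE] comp.IH(2)])
  ultimately have "finsupp n (\<lambda>p \<gamma>. (comm A f \<circ> g) p \<gamma> + (f \<circ> comm A g) p \<gamma>)"
    using finsupp_add by (simp add: comp_def)
  then show ?case unfolding comm_comp[OF A fE gE] .
qed

text \<open>F_n is a two-sided ideal of S_n, so it is stable under commutators with S_n.\<close>
lemma comm_F:
  fixes A :: "('k::field) op"
  assumes A: "A \<in> Salg n" and f: "f \<in> F n"
  shows "comm A f \<in> F n"
proof -
  have AE: "A \<in> EndK n" using A Salg_EndK by auto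
  have fE: "f \<in> EndK n" and fs: "finsupp n f" using f F_char by auto
  have "finsupp n (\<lambda>p. A (f p))" by (rule finsupp_lcomp[OF AE fE fs])
  moreover have "finsupp n (f \<circ> A)" by (rule finsupp_rcomp[OF A fE fs])
  ultimately have "finsupp n (\<lambda>p \<gamma>. A (f p) \<gamma> - (f \<circ> A) p \<gamma>)" by (rule finsupp_diff)
  then have "finsupp n (comm A f)" unfolding comm_def by (simp add: comp_def)
  then show ?thesis using F_char EndK_comm[OF AE fE] by auto
qed

section \<open>The inclusion of K + F_n and of S_1\<close>

text \<open>Scalars commute with everything and [S_n, F_n] \<subseteq> F_n, so K + F_n satisfies the condition.\<close>
lemma KplusF_sub:
  assumes "\<phi> \<in> KplusF n"
  shows "\<phi> \<in> (EndK n :: ('k::field) op set)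
    \<and> (\<forall>i<n. comm (Xop n i) \<phi> \<in> F n \<and> comm (Yop n i) \<phi> \<in> F n)"
proof -
  obtain c f where f: "f \<in> F n" and \<phi>: "\<phi> = (\<lambda>p \<gamma>. c * Idop n p \<gamma> + f p \<gamma>)"
    using assms unfolding KplusF_def by blast
  have fE: "f \<in> EndK n" using F_EndK[OF f] .
  have cI: "(\<lambda>p \<gamma>. c * Idop n p \<gamma>) \<in> EndK n" by (intro EndK_smult Idop_EndK)
  have comm_scalar: "comm A \<phi> = comm A f" if A: "A \<in> Salg n" for A :: "'k op"
  proof -
    have AE: "A \<in> EndK n" using A Salg_EndK by auto
    have "comm A \<phi> = comm A (\<lambda>p \<gamma>. (\<lambda>p \<gamma>. c * Idop n p \<gamma>) p \<gamma> + f p \<gamma>)" unfolding \<phi> by simp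
    also have "\<dots> = (\<lambda>p \<gamma>. comm A (\<lambda>p \<gamma>. c * Idop n p \<gamma>) p \<gamma> + comm A f p \<gamma>)"
      by (rule comm_add[OF AE cI fE])
    also have "comm A (\<lambda>p \<gamma>. c * Idop n p \<gamma>) = (\<lambda>p \<gamma>. c * comm A (Idop n) p \<gamma>)"
      by (rule comm_smult[OF AE Idop_EndK])
    finally show ?thesis unfolding comm_Id[OF AE] by simp
  qed
  have "\<phi> \<in> EndK n" unfolding \<phi> using EndK_add[OF cI fE] by simp
  then show ?thesis
    by (simp add: comm_scalar comm_F[OF _ f] Salg.genx Salg.geny)
qed

lemma Xop_Yop_mon:
  assumes i: "i < n" and d: "valid n \<delta>"
  shows "Xop n i (Yop n i (mon \<delta>)) = (if 0 < \<delta> i then mon \<delta> else (\<lambda>_. 0) :: ('k::field) pol)"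
proof (cases "0 < \<delta> i")
  case True
  have d': "valid n (\<delta>(i := \<delta> i - 1))" using d valid_upd[OF i] by simp
  have "Xop n i (Yop n i (mon \<delta>)) = (Xop n i (mon (\<delta>(i := \<delta> i - 1))) :: 'k pol)"
    using True by (simp add: Yop_mon[OF i d])
  also have "\<dots> = mon ((\<delta>(i := \<delta> i - 1))(i := Suc ((\<delta>(i := \<delta> i - 1)) i)))"
    by (rule Xop_mon[OF i d'])
  also have "(\<delta>(i := \<delta> i - 1))(i := Suc ((\<delta>(i := \<delta> i - 1)) i)) = \<delta>"
    using True by (auto simp: fun_eq_iff)
  finally show ?thesis using True by simp
qed (simp add: Yop_mon[OF i d])

lemma Yop_Xop_mon:
  assumes i: "i < n" and d: "valid n \<delta>"
  shows "Yop n i (Xop n i (mon \<delta>)) = (mon \<delta> :: ('k::field) pol)"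
proof -
  have d': "valid n (\<delta>(i := Suc (\<delta> i)))" using d valid_upd[OF i] by simp
  have "(\<delta>(i := Suc (\<delta> i)))(i := (\<delta>(i := Suc (\<delta> i))) i - 1) = \<delta>" by (auto simp: fun_eq_iff)
  then show ?thesis by (simp add: Xop_mon[OF i d] Yop_mon[OF i d'])
qed

text \<open>In one variable [x, y] = xy - 1 = -E_{00} has a single non-zero entry.\<close>
lemma finsupp_comm_x_y: "finsupp 1 (comm (Xop 1 0) (Yop 1 0) :: ('k::field) op)"
proof (rule finsuppI[of "{(\<lambda>_. 0, \<lambda>_. 0)}"])
  fix \<delta> \<gamma> assume d: "valid 1 \<delta>" and nz: "comm (Xop 1 0) (Yop 1 0) (mon \<delta>) \<gamma> \<noteq> (0::'k)"
  have "comm (Xop 1 0) (Yop 1 0) (mon \<delta>) \<gamma> = (if 0 < \<delta> 0 then mon \<delta> \<gamma> else 0) - (mon \<delta> \<gamma> :: 'k)"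
    unfolding comm_def Xop_Yop_mon[OF zero_less_one d] Yop_Xop_mon[OF zero_less_one d] by simp
  then have "\<delta> 0 = 0" "\<gamma> = \<delta>" using nz by (auto simp: mon_def split: if_splits)
  moreover have "\<delta> = (\<lambda>_. 0)" if "\<delta> 0 = 0"
    using d that unfolding valid_def by (metis One_nat_def less_one not_le)
  ultimately show "(\<gamma>, \<delta>) \<in> {(\<lambda>_. 0, \<lambda>_. 0)}" by simp
qed simp

text \<open>S_1 satisfies the condition: [x, S_1] and [y, S_1] are generated by [x, y] \<in> F_1.\<close>
lemma Salg1_sub:
  assumes "\<phi> \<in> Salg 1"
  shows "\<phi> \<in> (EndK 1 :: ('k::field) op set)
    \<and> (\<forall>i<1. comm (Xop 1 i) \<phi> \<in> F 1 \<and> comm (Yop 1 i) \<phi> \<in> F 1)"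
proof -
  have XE: "(Xop 1 0 :: 'k op) \<in> EndK 1" and YE: "(Yop 1 0 :: 'k op) \<in> EndK 1"
    by (auto intro: Xop_EndK Yop_EndK)
  have \<phi>E: "\<phi> \<in> EndK 1" using assms Salg_EndK by auto
  have "comm (Yop 1 0) (Xop 1 0) = (\<lambda>p \<gamma>. (-1) * comm (Xop 1 0) (Yop 1 0) p (\<gamma> :: nat \<Rightarrow> nat) :: 'k)"
    by (rule comm_swap)
  then have yx: "finsupp 1 (comm (Yop 1 0) (Xop 1 0) :: 'k op)"
    using finsupp_smult[OF finsupp_comm_x_y, of "-1"] by simp
  have "finsupp 1 (comm (Xop 1 0) \<phi>)"
  proof (rule finsupp_comm_Salg[OF XE _ _ assms])
    fix i :: nat assume "i < 1"
    then have i: "i = 0" by simp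
    show "finsupp 1 (comm (Xop 1 0) (Xop 1 i))" unfolding i comm_self by (rule finsupp_zero)
    show "finsupp 1 (comm (Xop 1 0) (Yop 1 i))" unfolding i by (rule finsupp_comm_x_y)
  qed
  moreover have "finsupp 1 (comm (Yop 1 0) \<phi>)"
  proof (rule finsupp_comm_Salg[OF YE _ _ assms])
    fix i :: nat assume "i < 1"
    then have i: "i = 0" by simp
    show "finsupp 1 (comm (Yop 1 0) (Xop 1 i) :: 'k op)" unfolding i by (rule yx)
    show "finsupp 1 (comm (Yop 1 0) (Yop 1 i))" unfolding i comm_self by (rule finsupp_zero)
  qed
  ultimately show ?thesis using \<phi>E EndK_comm[OF XE \<phi>E] EndK_comm[OF YE \<phi>E] F_char by auto
qed

section \<open>Entries far from the origin\<close>

definition deg :: "nat \<Rightarrow> (nat \<Rightarrow> nat) \<Rightarrow> nat" where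
  "deg n a = (\<Sum>j<n. a j)"

lemma deg_upd: "i < n \<Longrightarrow> deg n (a(i := k)) + a i = deg n a + k"
proof -
  assume i: "i < n"
  have "deg n (a(i := k)) = k + (\<Sum>j\<in>{..<n} - {i}. a j)"
    unfolding deg_def using i by (simp add: sum.remove)
  moreover have "deg n a = a i + (\<Sum>j\<in>{..<n} - {i}. a j)"
    unfolding deg_def using i by (simp add: sum.remove)
  ultimately show ?thesis by simp
qed

lemma deg_Suc: "i < n \<Longrightarrow> deg n (a(i := Suc (a i))) = Suc (deg n a)"
  using deg_upd[of i n a "Suc (a i)"] by simp

lemma deg_pred: "i < n \<Longrightarrow> 0 < a i \<Longrightarrow> Suc (deg n (a(i := a i - 1))) = deg n a"
  using deg_upd[of i n a "a i - 1"] by simp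

definition pow1 :: "nat \<Rightarrow> nat \<Rightarrow> nat" where
  "pow1 k = (\<lambda>_. 0)(0 := k)"

lemma pow1_valid: "0 < n \<Longrightarrow> valid n (pow1 k)"
  unfolding pow1_def valid_def by auto

lemma pow1_deg: "0 < n \<Longrightarrow> deg n (pow1 k) = k"
  unfolding pow1_def deg_def by (simp add: sum.remove)

lemma pow1_at0: "pow1 k 0 = k"
  unfolding pow1_def by simp

lemma pow1_upd: "(pow1 k)(0 := m) = pow1 m"
  unfolding pow1_def by simp

lemma pow1_inj: "pow1 k = pow1 l \<longleftrightarrow> k = l"
  unfolding pow1_def by (auto simp: fun_eq_iff)

lemma valid1_pow1: "valid 1 \<gamma> \<Longrightarrow> \<gamma> = pow1 (\<gamma> 0)"
  unfolding valid_def pow1_def by (auto simp: fun_eq_iff)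

lemma finite_deg_le: "finite {\<gamma>. valid n \<gamma> \<and> deg n \<gamma> \<le> T}"
proof (rule finite_subset)
  show "{\<gamma>. valid n \<gamma> \<and> deg n \<gamma> \<le> T} \<subseteq>
        {f. \<forall>x. (x \<in> {..<n} \<longrightarrow> f x \<in> {..T}) \<and> (x \<notin> {..<n} \<longrightarrow> f x = 0)}"
  proof
    fix \<gamma> assume "\<gamma> \<in> {\<gamma>. valid n \<gamma> \<and> deg n \<gamma> \<le> T}"
    then have v: "valid n \<gamma>" and dT: "deg n \<gamma> \<le> T" by auto
    have "\<gamma> x \<in> {..T}" if "x \<in> {..<n}" for x
    proof -
      have "\<gamma> x \<le> deg n \<gamma>" unfolding deg_def using that by (intro member_le_sum) auto
      then show ?thesis using dT by simp
    qed
    moreover have "\<gamma> x = 0" if "x \<notin> {..<n}" for x using v that unfolding valid_def by auto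
    ultimately show "\<gamma> \<in> {f. \<forall>x. (x \<in> {..<n} \<longrightarrow> f x \<in> {..T}) \<and> (x \<notin> {..<n} \<longrightarrow> f x = 0)}"
      by blast
  qed
  show "finite {f. \<forall>x. (x \<in> {..<n} \<longrightarrow> f x \<in> {..T}) \<and> (x \<notin> {..<n} \<longrightarrow> f x = (0::nat))}"
    by (rule finite_set_of_finite_funs) auto
qed

definition vanishes_beyond :: "nat \<Rightarrow> nat \<Rightarrow> ('k::field) op \<Rightarrow> bool" where
  "vanishes_beyond n T f \<longleftrightarrow>
     (\<forall>\<delta> \<gamma>. valid n \<delta> \<longrightarrow> T \<le> deg n \<gamma> + deg n \<delta> \<longrightarrow> f (mon \<delta>) \<gamma> = 0)"

lemma vanishes_beyond_mono:
  "vanishes_beyond n T f \<Longrightarrow> T \<le> T' \<Longrightarrow> vanishes_beyond n T' f"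
  unfolding vanishes_beyond_def by auto

lemma finsupp_vanishes_beyond:
  assumes "finsupp n f"
  shows "\<exists>T. vanishes_beyond n T f"
proof -
  obtain S where S: "finite S" "\<And>\<delta> \<gamma>. valid n \<delta> \<Longrightarrow> f (mon \<delta>) \<gamma> \<noteq> 0 \<Longrightarrow> (\<gamma>, \<delta>) \<in> S"
    using assms unfolding finsupp_def by blast
  let ?size = "\<lambda>s. deg n (fst s) + deg n (snd s)"
  have "finite (?size ` S)" using S(1) by simp
  then obtain T where T: "\<forall>x\<in>?size ` S. x < T"
    using finite_nat_set_iff_bounded by blast
  have "vanishes_beyond n T f"
    unfolding vanishes_beyond_def
  proof (intro allI impI)
    fix \<delta> \<gamma> assume d: "valid n \<delta>" and big: "T \<le> deg n \<gamma> + deg n \<delta>"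
    show "f (mon \<delta>) \<gamma> = 0"
    proof (rule ccontr)
      assume "f (mon \<delta>) \<gamma> \<noteq> 0"
      then have "(\<gamma>, \<delta>) \<in> S" by (rule S(2)[OF d])
      then have "?size (\<gamma>, \<delta>) < T" using T by blast
      then show False using big by simp
    qed
  qed
  then show ?thesis ..
qed

lemma vanishes_beyond_finsupp:
  assumes fE: "f \<in> EndK n" and f: "vanishes_beyond n T f"
  shows "finsupp n f"
proof (rule finsuppI)
  let ?B = "{\<gamma>. valid n \<gamma> \<and> deg n \<gamma> \<le> T}"
  show "finite (?B \<times> ?B)" using finite_deg_le by blast
  fix \<delta> \<gamma> assume d: "valid n \<delta>" and nz: "f (mon \<delta>) \<gamma> \<noteq> 0"
  then have "valid n \<gamma>" using Pn_valid[OF EndK_Pn[OF fE]] by blast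
  moreover have "deg n \<gamma> + deg n \<delta> < T"
  proof (rule ccontr)
    assume "\<not> deg n \<gamma> + deg n \<delta> < T"
    then show False using f d nz unfolding vanishes_beyond_def by simp
  qed
  ultimately show "(\<gamma>, \<delta>) \<in> ?B \<times> ?B" using d by simp
qed

lemma common_bound:
  fixes P :: "nat \<Rightarrow> nat \<Rightarrow> bool"
  assumes ex: "\<And>i. i < m \<Longrightarrow> \<exists>T. P i T" and mono: "\<And>i T T'. P i T \<Longrightarrow> T \<le> T' \<Longrightarrow> P i T'"
  shows "\<exists>T. \<forall>i<m. P i T"
  using ex
proof (induction m)
  case (Suc m)
  obtain T where T: "\<forall>i<m. P i T" using Suc.IH Suc.prems by force
  obtain T' where T': "P m T'" using Suc.prems by blast
  have "P i (max T T')" if "i < Suc m" for i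
  proof (cases "i < m")
    case True
    then show ?thesis using mono T max.cobounded1 by blast
  next
    case False
    then have "i = m" using that by simp
    then show ?thesis using mono[OF T' max.cobounded2[of T' T]] by simp
  qed
  then show ?case by blast
qed simp

lemma comm_F_vanishes_beyond:
  assumes "\<forall>i<n. comm (Xop n i) \<phi> \<in> F n \<and> comm (Yop n i) \<phi> \<in> F n"
  shows "\<exists>T. \<forall>i<n. vanishes_beyond n T (comm (Xop n i) \<phi>)
                 \<and> vanishes_beyond n T (comm (Yop n i) (\<phi> :: ('k::field) op))"
proof (rule common_bound)
  fix i assume "i < n"
  then have "finsupp n (comm (Xop n i) \<phi>)" "finsupp n (comm (Yop n i) \<phi>)"
    using assms F_finsupp by auto
  then obtain T T' where "vanishes_beyond n T (comm (Xop n i) \<phi>)"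
    and "vanishes_beyond n T' (comm (Yop n i) \<phi>)"
    using finsupp_vanishes_beyond by blast
  then have "vanishes_beyond n (max T T') (comm (Xop n i) \<phi>)
      \<and> vanishes_beyond n (max T T') (comm (Yop n i) \<phi>)"
    using vanishes_beyond_mono max.cobounded1 max.cobounded2 by blast
  then show "\<exists>T. vanishes_beyond n T (comm (Xop n i) \<phi>) \<and> vanishes_beyond n T (comm (Yop n i) \<phi>)" ..
next
  fix i T T'
  assume "vanishes_beyond n T (comm (Xop n i) \<phi>) \<and> vanishes_beyond n T (comm (Yop n i) \<phi>)"
    and "T \<le> T'"
  then show "vanishes_beyond n T' (comm (Xop n i) \<phi>) \<and> vanishes_beyond n T' (comm (Yop n i) \<phi>)"
    using vanishes_beyond_mono by blast
qed

lemma comm_X_mon: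
  fixes \<phi> :: "('k::field) op"
  assumes f: "\<phi> \<in> EndK n" and i: "i < n" and d: "valid n \<delta>"
  shows "comm (Xop n i) \<phi> (mon \<delta>) \<gamma> = (if 0 < \<gamma> i then \<phi> (mon \<delta>) (\<gamma>(i := \<gamma> i - 1)) else 0)
           - \<phi> (mon (\<delta>(i := Suc (\<delta> i)))) \<gamma>"
proof -
  have "Xop n i (\<phi> (mon \<delta>)) \<gamma> = (if 0 < \<gamma> i then \<phi> (mon \<delta>) (\<gamma>(i := \<gamma> i - 1)) else 0)"
    using EndK_Pn[OF f] by (simp add: Xop_def)
  then show ?thesis unfolding comm_def by (simp add: Xop_mon[OF i d])
qed

lemma comm_Y_mon:
  fixes \<phi> :: "('k::field) op"
  assumes f: "\<phi> \<in> EndK n" and i: "i < n" and d: "valid n \<delta>"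
  shows "comm (Yop n i) \<phi> (mon \<delta>) \<gamma> = \<phi> (mon \<delta>) (\<gamma>(i := Suc (\<gamma> i)))
           - (if 0 < \<delta> i then \<phi> (mon (\<delta>(i := \<delta> i - 1))) \<gamma> else 0)"
proof -
  have "Yop n i (\<phi> (mon \<delta>)) \<gamma> = \<phi> (mon \<delta>) (\<gamma>(i := Suc (\<gamma> i)))"
    using EndK_Pn[OF f] by (simp add: Yop_def)
  moreover have "\<phi> (Yop n i (mon \<delta>)) \<gamma> = (if 0 < \<delta> i then \<phi> (mon (\<delta>(i := \<delta> i - 1))) \<gamma> else 0)"
    by (simp add: Yop_mon[OF i d] EndK_zero[OF f])
  ultimately show ?thesis unfolding comm_def by simp
qed

definition transfer :: "nat \<Rightarrow> nat \<Rightarrow> (nat \<Rightarrow> nat) \<Rightarrow> nat \<Rightarrow> nat" where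
  "transfer i j a = (a(i := a i - 1))(j := Suc (a j))"

lemma transfer_valid: "i < n \<Longrightarrow> j < n \<Longrightarrow> valid n a \<Longrightarrow> valid n (transfer i j a)"
  unfolding transfer_def using valid_upd by simp

lemma transfer_deg:
  assumes "i < n" "j < n" "j \<noteq> i" "0 < a i"
  shows "deg n (transfer i j a) = deg n a"
  unfolding transfer_def
  using deg_Suc[OF assms(2), of "a(i := a i - 1)"] deg_pred[of i n a, OF assms(1,4)] assms(3) by simp

lemma transfer_at: "j \<noteq> i \<Longrightarrow> transfer i j a i = a i - 1"
  unfolding transfer_def by simp

lemma transfer_raise: "j \<noteq> i \<Longrightarrow> 0 < a i \<Longrightarrow>
    (transfer i j a)(i := Suc (transfer i j a i)) = a(j := Suc (a j))"
  unfolding transfer_def by (auto simp: fun_eq_iff)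

locale far_commuting =
  fixes n T :: nat and \<phi> :: "('k::field) op"
  assumes \<phi>E: "\<phi> \<in> EndK n"
    and comm_vanish: "\<And>i. i < n \<Longrightarrow>
      vanishes_beyond n T (comm (Xop n i) \<phi>) \<and> vanishes_beyond n T (comm (Yop n i) \<phi>)"
begin

lemma comm_X_zero: "i < n \<Longrightarrow> valid n \<delta> \<Longrightarrow> T \<le> deg n \<gamma> + deg n \<delta> \<Longrightarrow>
    comm (Xop n i) \<phi> (mon \<delta>) \<gamma> = 0"
  using comm_vanish unfolding vanishes_beyond_def by blast

lemma comm_Y_zero: "i < n \<Longrightarrow> valid n \<delta> \<Longrightarrow> T \<le> deg n \<gamma> + deg n \<delta> \<Longrightarrow>
    comm (Yop n i) \<phi> (mon \<delta>) \<gamma> = 0"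
  using comm_vanish unfolding vanishes_beyond_def by blast

lemma shift_invariant:
  assumes i: "i < n" and d: "valid n \<delta>" and T: "T \<le> deg n \<gamma> + deg n \<delta>"
  shows "\<phi> (mon (\<delta>(i := Suc (\<delta> i)))) (\<gamma>(i := Suc (\<gamma> i))) = \<phi> (mon \<delta>) \<gamma>"
proof -
  let ?g = "\<gamma>(i := Suc (\<gamma> i))"
  have "T \<le> deg n ?g + deg n \<delta>" using T deg_Suc[OF i, of \<gamma>] by simp
  then have "comm (Xop n i) \<phi> (mon \<delta>) ?g = 0" by (rule comm_X_zero[OF i d])
  then show ?thesis using comm_X_mon[OF \<phi>E i d, of ?g] by simp
qed

lemma shift_invariant_iter:
  assumes i: "i < n" and d: "valid n \<delta>" and T: "T \<le> deg n \<gamma> + deg n \<delta>"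
  shows "\<phi> (mon (\<delta>(i := \<delta> i + t))) (\<gamma>(i := \<gamma> i + t)) = \<phi> (mon \<delta>) \<gamma>"
proof (induction t)
  case (Suc t)
  let ?g = "\<gamma>(i := \<gamma> i + t)" and ?d = "\<delta>(i := \<delta> i + t)"
  have vd: "valid n ?d" using d valid_upd[OF i] by simp
  have "T \<le> deg n ?g + deg n ?d" using T deg_upd[OF i, of \<gamma> "\<gamma> i + t"] deg_upd[OF i, of \<delta> "\<delta> i + t"]
    by simp
  then have step: "\<phi> (mon (?d(i := Suc (?d i)))) (?g(i := Suc (?g i))) = \<phi> (mon ?d) ?g"
    by (rule shift_invariant[OF i vd])
  have "\<delta>(i := \<delta> i + Suc t) = ?d(i := Suc (?d i))" "\<gamma>(i := \<gamma> i + Suc t) = ?g(i := Suc (?g i))"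
    by simp_all
  then show ?case using step Suc.IH by (simp only:)
qed simp

lemma boundary_row:
  assumes i: "i < n" and d: "valid n \<delta>" and T: "T \<le> deg n \<gamma> + deg n \<delta>" and z: "\<gamma> i = 0"
  shows "\<phi> (mon (\<delta>(i := Suc (\<delta> i)))) \<gamma> = 0"
  using comm_X_zero[OF i d T] comm_X_mon[OF \<phi>E i d, of \<gamma>] z by simp

lemma boundary_column:
  assumes i: "i < n" and d: "valid n \<delta>" and T: "T \<le> deg n \<gamma> + deg n \<delta>" and z: "\<delta> i = 0"
  shows "\<phi> (mon \<delta>) (\<gamma>(i := Suc (\<gamma> i))) = 0"
  using comm_Y_zero[OF i d T] comm_Y_mon[OF \<phi>E i d, of \<gamma>] z by simp

lemma diagonal_climb:
  assumes \<nu>: "valid n \<nu>" and \<gamma>: "valid n \<gamma>" and le: "\<forall>j. \<gamma> j \<le> \<nu> j" and T: "T \<le> 2 * deg n \<gamma>"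
  shows "\<phi> (mon \<nu>) \<nu> = \<phi> (mon \<gamma>) \<gamma>"
proof -
  have "\<phi> (mon \<nu>) \<nu> = \<phi> (mon \<gamma>) \<gamma>"
    if "deg n \<nu> - deg n \<gamma> = d" "valid n \<gamma>" "\<forall>j. \<gamma> j \<le> \<nu> j" "T \<le> 2 * deg n \<gamma>" for d \<gamma>
    using that
  proof (induction d arbitrary: \<gamma>)
    case 0
    have "deg n \<gamma> \<le> deg n \<nu>" unfolding deg_def using "0.prems"(3) by (intro sum_mono) auto
    moreover have "deg n \<gamma> < deg n \<nu>" if "j < n" "\<gamma> j < \<nu> j" for j
      unfolding deg_def using "0.prems"(3) that by (intro sum_strict_mono_ex1) auto
    ultimately have "\<forall>j<n. \<gamma> j = \<nu> j" using "0.prems"(1,3) le_neq_implies_less by fastforce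
    then show ?case using valid_eq[OF "0.prems"(2) \<nu>] by simp
  next
    case (Suc d)
    have "\<gamma> \<noteq> \<nu>" using Suc.prems(1) by auto
    then obtain j where j: "j < n" "\<gamma> j < \<nu> j"
      using valid_eq[OF Suc.prems(2) \<nu>] Suc.prems(3) le_neq_implies_less by blast
    let ?g = "\<gamma>(j := Suc (\<gamma> j))"
    have "valid n ?g" using Suc.prems(2) valid_upd[OF j(1)] by simp
    moreover have "\<forall>i. ?g i \<le> \<nu> i" using Suc.prems(3) j by auto
    moreover have "deg n ?g = Suc (deg n \<gamma>)" by (rule deg_Suc[OF j(1)])
    then have "deg n \<nu> - deg n ?g = d" and "T \<le> 2 * deg n ?g" using Suc.prems(1,4) by simp_all
    ultimately have "\<phi> (mon \<nu>) \<nu> = \<phi> (mon ?g) ?g" using Suc.IH by blast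
    also have "\<dots> = \<phi> (mon \<gamma>) \<gamma>" using Suc.prems(4) by (intro shift_invariant[OF j(1) Suc.prems(2)]) simp
    finally show ?case .
  qed
  then show ?thesis using \<gamma> le T by blast
qed

text \<open>Hence all far diagonal entries are equal (climb to the componentwise maximum).\<close>
lemma diagonal_const:
  assumes g: "valid n \<gamma>" and g': "valid n \<gamma>'" and T: "T \<le> 2 * deg n \<gamma>" and T': "T \<le> 2 * deg n \<gamma>'"
  shows "\<phi> (mon \<gamma>) \<gamma> = \<phi> (mon \<gamma>') \<gamma>'"
proof -
  let ?\<nu> = "\<lambda>j. max (\<gamma> j) (\<gamma>' j)"
  have \<nu>: "valid n ?\<nu>" using g g' unfolding valid_def by auto
  show ?thesis using diagonal_climb[OF \<nu> g _ T] diagonal_climb[OF \<nu> g' _ T'] by simp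
qed

lemma boundary_zero:
  assumes i: "i < n" and d: "valid n \<delta>" and T: "Suc T \<le> deg n \<gamma> + deg n \<delta>"
    and ne: "\<gamma> i \<noteq> \<delta> i" and min0: "min (\<gamma> i) (\<delta> i) = 0"
  shows "\<phi> (mon \<delta>) \<gamma> = 0"
proof (cases "\<gamma> i = 0")
  case True
  then have pos: "0 < \<delta> i" using ne by simp
  let ?d = "\<delta>(i := \<delta> i - 1)"
  have "valid n ?d" using d valid_upd[OF i] by simp
  moreover have "T \<le> deg n \<gamma> + deg n ?d" using T deg_pred[of i n \<delta>, OF i pos] by simp
  ultimately have "\<phi> (mon (?d(i := Suc (?d i)))) \<gamma> = 0" using True by (rule boundary_row[OF i])
  moreover have "?d(i := Suc (?d i)) = \<delta>" using pos by (auto simp: fun_eq_iff)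
  ultimately show ?thesis by simp
next
  case False
  then have z: "\<delta> i = 0" and pos: "0 < \<gamma> i" using min0 by auto
  let ?g = "\<gamma>(i := \<gamma> i - 1)"
  have "T \<le> deg n ?g + deg n \<delta>" using T deg_pred[of i n \<gamma>, OF i pos] by simp
  then have "\<phi> (mon \<delta>) (?g(i := Suc (?g i))) = 0" using z by (rule boundary_column[OF i d])
  moreover have "?g(i := Suc (?g i)) = \<gamma>" using pos by (auto simp: fun_eq_iff)
  ultimately show ?thesis by simp
qed

text \<open>Far out, applying the transfer to both row and column does not change the entry:
  shift up in j, then down in i.\<close>
lemma transfer_invariant:
  assumes i: "i < n" and j: "j < n" "j \<noteq> i" and g: "valid n \<gamma>" and d: "valid n \<delta>"
    and T: "T \<le> deg n \<gamma> + deg n \<delta>" and pg: "0 < \<gamma> i" and pd: "0 < \<delta> i"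
  shows "\<phi> (mon (transfer i j \<delta>)) (transfer i j \<gamma>) = \<phi> (mon \<delta>) \<gamma>"
proof -
  have "\<phi> (mon (transfer i j \<delta>)) (transfer i j \<gamma>)
      = \<phi> (mon (\<delta>(j := Suc (\<delta> j)))) (\<gamma>(j := Suc (\<gamma> j)))"
    unfolding transfer_raise[where a = \<gamma>, OF j(2) pg, symmetric] transfer_raise[where a = \<delta>, OF j(2) pd, symmetric]
    using T transfer_deg[where a = \<gamma>, OF i j pg] transfer_deg[where a = \<delta>, OF i j pd]
    by (intro shift_invariant[OF i transfer_valid[OF i j(1) d], symmetric]) simp
  also have "\<dots> = \<phi> (mon \<delta>) \<gamma>" by (rule shift_invariant[OF j(1) d T])
  finally show ?thesis .
qed

text \<open>With a second variable j, transfers from i to j lower min(\<gamma>_i, \<delta>_i) at constant total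
  degree until the entry reaches the boundary, so all far off-diagonal entries vanish.\<close>
lemma off_diagonal_zero:
  assumes n2: "2 \<le> n" and i: "i < n" and g: "valid n \<gamma>" and d: "valid n \<delta>"
    and T: "Suc T \<le> deg n \<gamma> + deg n \<delta>" and ne: "\<gamma> i \<noteq> \<delta> i"
  shows "\<phi> (mon \<delta>) \<gamma> = 0"
proof -
  define j :: nat where "j = (if i = 0 then 1 else 0)"
  have j: "j < n" "j \<noteq> i" using n2 i by (auto simp: j_def)
  have "\<phi> (mon \<delta>) \<gamma> = 0"
    if "min (\<gamma> i) (\<delta> i) = m" "valid n \<gamma>" "valid n \<delta>" "Suc T \<le> deg n \<gamma> + deg n \<delta>" "\<gamma> i \<noteq> \<delta> i"
    for m \<gamma> \<delta>
    using that
  proof (induction m arbitrary: \<gamma> \<delta>)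
    case 0
    then show ?case using boundary_zero[OF i] by blast
  next
    case (Suc m)
    then have pg: "0 < \<gamma> i" and pd: "0 < \<delta> i" by auto
    have "\<phi> (mon (transfer i j \<delta>)) (transfer i j \<gamma>) = 0"
    proof (rule Suc.IH)
      show "min (transfer i j \<gamma> i) (transfer i j \<delta> i) = m" "transfer i j \<gamma> i \<noteq> transfer i j \<delta> i"
        using Suc.prems(1,5) pg pd transfer_at[OF j(2)] by auto
      show "Suc T \<le> deg n (transfer i j \<gamma>) + deg n (transfer i j \<delta>)"
        using Suc.prems(4) transfer_deg[where a = \<gamma>, OF i j pg] transfer_deg[where a = \<delta>, OF i j pd] by simp
    qed (use transfer_valid[OF i j(1)] Suc.prems(2,3) in auto)
    then show ?case
      using transfer_invariant[OF i j Suc.prems(2,3) _ pg pd] Suc.prems(4) by simp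
  qed
  then show ?thesis using g d T ne by blast
qed

end

section \<open>n \<ge> 2: \<phi> is a scalar plus an element of F_n\<close>

text \<open>c is the common value of the far diagonal entries; \<phi> - c\<cdot>1 vanishes beyond degree T + 1.\<close>
lemma (in far_commuting) scalar_plus_F:
  assumes n2: "2 \<le> n"
  shows "\<phi> \<in> KplusF n"
proof -
  have vT: "valid n (pow1 T)" and dT: "deg n (pow1 T) = T" using n2 by (simp_all add: pow1_valid pow1_deg)
  define c where "c = \<phi> (mon (pow1 T)) (pow1 T)"
  define f where "f = (\<lambda>p \<gamma>. \<phi> p \<gamma> - c * Idop n p \<gamma>)"
  have fE: "f \<in> EndK n" unfolding f_def by (intro EndK_diff \<phi>E EndK_smult Idop_EndK)
  have "vanishes_beyond n (Suc T) f"
    unfolding vanishes_beyond_def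
  proof (intro allI impI)
    fix \<delta> \<gamma> assume d: "valid n \<delta>" and big: "Suc T \<le> deg n \<gamma> + deg n \<delta>"
    have f_entry: "f (mon \<delta>) \<gamma> = \<phi> (mon \<delta>) \<gamma> - c * mon \<delta> \<gamma>"
      unfolding f_def by (simp add: Idop_mon[OF d])
    consider (outside) "\<not> valid n \<gamma>" | (diagonal) "\<gamma> = \<delta>" | (off) "valid n \<gamma>" "\<gamma> \<noteq> \<delta>" by blast
    then show "f (mon \<delta>) \<gamma> = 0"
    proof cases
      case outside
      then have "\<phi> (mon \<delta>) \<gamma> = 0" and "\<gamma> \<noteq> \<delta>" using Pn_valid[OF EndK_Pn[OF \<phi>E]] d by auto
      then show ?thesis using f_entry by (simp add: mon_def)
    next
      case diagonal
      have "\<phi> (mon \<delta>) \<delta> = c"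
        unfolding c_def using big diagonal dT by (intro diagonal_const[OF d vT]) simp_all
      then show ?thesis using f_entry diagonal by (simp add: mon_def)
    next
      case off
      then obtain i where "i < n" "\<gamma> i \<noteq> \<delta> i" using valid_eq[OF _ d] by blast
      then have "\<phi> (mon \<delta>) \<gamma> = 0" using off_diagonal_zero[OF n2 _ off(1) d big] by blast
      then show ?thesis using f_entry off by (simp add: mon_def)
    qed
  qed
  then have "f \<in> F n" by (intro finsupp_F fE vanishes_beyond_finsupp)
  moreover have "\<phi> = (\<lambda>p \<gamma>. c * Idop n p \<gamma> + f p \<gamma>)" unfolding f_def by simp
  ultimately show ?thesis unfolding KplusF_def by blast
qed

section \<open>n = 1: \<phi> agrees far out with a polynomial in x and y\<close>

lemma Xpow_pow1_entry:
  "((Xop 1 0 ^^ d) \<circ> Idop 1) (mon (pow1 l)) (pow1 k) = (if d = k - l \<and> l \<le> k then 1 else (0::'k::field))"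
proof -
  have v: "valid 1 (pow1 l)" by (simp add: pow1_valid)
  have "((Xop 1 0 ^^ d) \<circ> Idop 1) (mon (pow1 l)) = (Xop 1 0 ^^ d) (mon (pow1 l) :: 'k pol)"
    by (simp add: Idop_mon pow1_valid)
  also have "\<dots> = mon ((pow1 l)(0 := pow1 l 0 + d))" by (rule Xpow_mon[OF _ v]) simp
  also have "\<dots> = mon (pow1 (l + d))" by (simp only: pow1_at0 pow1_upd)
  finally show ?thesis by (auto simp: mon_def pow1_inj)
qed

lemma Ypow_pow1_entry:
  assumes "1 \<le> d"
  shows "((Yop 1 0 ^^ d) \<circ> Idop 1) (mon (pow1 l)) (pow1 k) = (if d = l - k \<and> k < l then 1 else (0::'k::field))"
proof -
  have v: "valid 1 (pow1 l)" by (simp add: pow1_valid)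
  have "((Yop 1 0 ^^ d) \<circ> Idop 1) (mon (pow1 l)) = (Yop 1 0 ^^ d) (mon (pow1 l) :: 'k pol)"
    by (simp add: Idop_mon pow1_valid)
  also have "\<dots> = (if d \<le> pow1 l 0 then mon ((pow1 l)(0 := pow1 l 0 - d)) else (\<lambda>_. 0))"
    by (rule Ypow_mon[OF _ v]) simp
  also have "\<dots> = (if d \<le> l then mon (pow1 (l - d)) else (\<lambda>_. 0))" by (simp only: pow1_at0 pow1_upd)
  finally show ?thesis using assms by (auto simp: mon_def pow1_inj)
qed

locale far_commuting_1 = far_commuting 1 T \<phi> for T :: nat and \<phi> :: "('k::field) op"
begin

definition entry :: "nat \<Rightarrow> nat \<Rightarrow> 'k" where
  "entry k l = \<phi> (mon (pow1 l)) (pow1 k)"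

lemma entry_shift: "T \<le> k + l \<Longrightarrow> entry (k + t) (l + t) = entry k l"
  using shift_invariant_iter[of 0 "pow1 l" "pow1 k" t]
  by (simp add: entry_def pow1_valid pow1_deg pow1_at0 pow1_upd)

lemma entry_first_row: "T \<le> l \<Longrightarrow> entry 0 (Suc l) = 0"
  using boundary_row[of 0 "pow1 l" "pow1 0"]
  by (simp add: entry_def pow1_valid pow1_deg pow1_at0 pow1_upd)

lemma entry_first_column: "T \<le> k \<Longrightarrow> entry (Suc k) 0 = 0"
  using boundary_column[of 0 "pow1 0" "pow1 k"]
  by (simp add: entry_def pow1_valid pow1_deg pow1_at0 pow1_upd)

definition lower :: "nat \<Rightarrow> 'k" where "lower d = entry (d + T) T"
definition upper :: "nat \<Rightarrow> 'k" where "upper d = entry T (d + T)"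

lemma entry_toeplitz:
  assumes "T \<le> k + l"
  shows "entry k l = (if l \<le> k then lower (k - l) else upper (l - k))"
proof (cases "l \<le> k")
  case True
  show ?thesis
  proof (cases "T \<le> l")
    case True
    then have "entry (k - l + T + (l - T)) (T + (l - T)) = entry (k - l + T) T"
      by (intro entry_shift) simp
    then show ?thesis using True \<open>l \<le> k\<close> by (simp add: lower_def)
  next
    case False
    then have "entry (k + (T - l)) (l + (T - l)) = entry k l" using assms by (intro entry_shift)
    then show ?thesis using False \<open>l \<le> k\<close> by (simp add: lower_def)
  qed
next
  case False
  show ?thesis
  proof (cases "T \<le> k")
    case True
    then have "entry (T + (k - T)) (l - k + T + (k - T)) = entry T (l - k + T)"
      by (intro entry_shift) simp
    then show ?thesis using True \<open>\<not> l \<le> k\<close> by (simp add: upper_def)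
  next
    case False
    then have "entry (k + (T - k)) (l + (T - k)) = entry k l" using assms by (intro entry_shift)
    then show ?thesis using False \<open>\<not> l \<le> k\<close> by (simp add: upper_def)
  qed
qed

lemma lower_vanish: "T < d \<Longrightarrow> lower d = 0"
  using entry_toeplitz[of d 0] entry_first_column[of "d - 1"] by simp

lemma upper_vanish: "T < d \<Longrightarrow> upper d = 0"
  using entry_toeplitz[of 0 d] entry_first_row[of "d - 1"] by simp

definition band :: "'k op" where
  "band = (\<lambda>p \<gamma>. (\<Sum>d\<in>{..T}. lower d * ((Xop 1 0 ^^ d) \<circ> Idop 1) p \<gamma>)
                + (\<Sum>d\<in>{1..T}. upper d * ((Yop 1 0 ^^ d) \<circ> Idop 1) p \<gamma>))"

lemma band_Salg: "band \<in> Salg 1"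
proof -
  have "(\<lambda>p \<gamma>. \<Sum>d\<in>{..T}. lower d * ((Xop 1 0 ^^ d) \<circ> Idop 1) p \<gamma>) \<in> Salg 1"
    by (intro Salg_sum Salg_Xpow Salg.one) simp_all
  moreover have "(\<lambda>p \<gamma>. \<Sum>d\<in>{1..T}. upper d * ((Yop 1 0 ^^ d) \<circ> Idop 1) p \<gamma>) \<in> Salg 1"
    by (intro Salg_sum Salg_Ypow Salg.one) simp_all
  ultimately show ?thesis unfolding band_def by (rule Salg.add)
qed

lemma band_entry:
  "band (mon (pow1 l)) (pow1 k) =
     (if l \<le> k \<and> k - l \<le> T then lower (k - l) else 0)
   + (if k < l \<and> l - k \<le> T then upper (l - k) else 0)"
proof -
  have "(\<Sum>d\<in>{..T}. lower d * ((Xop 1 0 ^^ d) \<circ> Idop 1) (mon (pow1 l)) (pow1 k))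
      = (\<Sum>d\<in>{..T}. if d = k - l then (if l \<le> k then lower d else 0) else 0)"
    by (rule sum.cong[OF refl]) (unfold Xpow_pow1_entry, simp)
  moreover have "(\<Sum>d\<in>{1..T}. upper d * ((Yop 1 0 ^^ d) \<circ> Idop 1) (mon (pow1 l)) (pow1 k))
      = (\<Sum>d\<in>{1..T}. if d = l - k then (if k < l then upper d else 0) else 0)"
  proof (rule sum.cong[OF refl])
    fix d assume "d \<in> {1..T}"
    then have "1 \<le> d" by simp
    show "upper d * ((Yop 1 0 ^^ d) \<circ> Idop 1) (mon (pow1 l)) (pow1 k)
        = (if d = l - k then (if k < l then upper d else 0) else 0)"
      unfolding Ypow_pow1_entry[OF \<open>1 \<le> d\<close>] by simp
  qed
  ultimately show ?thesis unfolding band_def by (auto simp: sum.delta')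
qed

text \<open>\<phi> differs from the band element only in finitely many entries, hence lies in S_1.\<close>
lemma in_S1: "\<phi> \<in> Salg 1"
proof -
  have GE: "band \<in> EndK 1" using band_Salg Salg_EndK by auto
  define f where "f = (\<lambda>p \<gamma>. \<phi> p \<gamma> - band p \<gamma>)"
  have fE: "f \<in> EndK 1" unfolding f_def by (rule EndK_diff[OF \<phi>E GE])
  have "vanishes_beyond 1 T f"
    unfolding vanishes_beyond_def
  proof (intro allI impI)
    fix \<delta> \<gamma> assume d: "valid 1 \<delta>" and big: "T \<le> deg 1 \<gamma> + deg 1 \<delta>"
    show "f (mon \<delta>) \<gamma> = 0"
    proof (cases "valid 1 \<gamma>")
      case False
      then show ?thesis unfolding f_def using Pn_valid[OF EndK_Pn[OF \<phi>E]] Pn_valid[OF EndK_Pn[OF GE]]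
        by simp
    next
      case True
      define k l where "k = \<gamma> 0" and "l = \<delta> 0"
      have \<gamma>: "\<gamma> = pow1 k" and \<delta>: "\<delta> = pow1 l"
        unfolding k_def l_def using valid1_pow1 True d by blast+
      have "T \<le> k + l" using big by (simp add: \<gamma> \<delta> pow1_deg)
      then have "band (mon \<delta>) \<gamma> = entry k l"
        unfolding \<gamma> \<delta> band_entry entry_toeplitz[OF \<open>T \<le> k + l\<close>]
        using lower_vanish upper_vanish by auto
      then show ?thesis unfolding f_def entry_def \<gamma> \<delta> by simp
    qed
  qed
  then have "f \<in> Salg 1" by (intro F_Salg finsupp_F fE vanishes_beyond_finsupp)
  then have "(\<lambda>p \<gamma>. band p \<gamma> + f p \<gamma>) \<in> Salg 1" by (rule Salg.add[OF band_Salg])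
  moreover have "(\<lambda>p \<gamma>. band p \<gamma> + f p \<gamma>) = \<phi>" unfolding f_def by simp
  ultimately show ?thesis by simp
qed

end

lemma KplusF_of_comm_F:
  assumes n2: "2 \<le> n" and \<phi>E: "\<phi> \<in> EndK n"
    and comm: "\<forall>i<n. comm (Xop n i) \<phi> \<in> F n \<and> comm (Yop n i) \<phi> \<in> F n"
  shows "\<phi> \<in> KplusF n"
proof -
  obtain T where "\<forall>i<n. vanishes_beyond n T (comm (Xop n i) \<phi>) \<and> vanishes_beyond n T (comm (Yop n i) \<phi>)"
    using comm_F_vanishes_beyond[OF comm] by blast
  then interpret far_commuting n T \<phi> using \<phi>E by unfold_locales auto
  show ?thesis by (rule scalar_plus_F[OF n2])
qed

lemma Salg1_of_comm_F:
  assumes \<phi>E: "\<phi> \<in> EndK 1"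
    and comm: "\<forall>i<1. comm (Xop 1 i) \<phi> \<in> F 1 \<and> comm (Yop 1 i) \<phi> \<in> F 1"
  shows "\<phi> \<in> Salg 1"
proof -
  obtain T where "\<forall>i<1. vanishes_beyond 1 T (comm (Xop 1 i) \<phi>) \<and> vanishes_beyond 1 T (comm (Yop 1 i) \<phi>)"
    using comm_F_vanishes_beyond[OF comm] by blast
  then interpret far_commuting_1 T \<phi> using \<phi>E by unfold_locales auto
  show ?thesis by (rule in_S1)
qed

theorem corollary6p7:
  fixes n :: nat
  assumes "n \<ge> 1"
  shows "{\<phi> \<in> (EndK n :: ('k::field_char_0) op set).
            \<forall>i<n. comm (Xop n i) \<phi> \<in> F n \<and> comm (Yop n i) \<phi> \<in> F n}
         = (if n = 1 then Salg 1 else KplusF n)"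
proof (cases "n = 1")
  case True
  then show ?thesis using Salg1_of_comm_F Salg1_sub by auto
next
  case False
  then have "2 \<le> n" using assms by simp
  then show ?thesis using False KplusF_of_comm_F KplusF_sub by auto
qed

end
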